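(* Let $d,H,\mathfrak{d}\in\mathbb{N}$, $\mathscr{a}\in\mathbb{R}$, $\mathscr{b}\in(\mathscr{a},\infty)$, $f\in C([\mathscr{a},\mathscr{b}]^d,\mathbb{R})$ with $\mathfrak{d}=dH+2H+1$. Let $\mathfrak{R}_r\in C(\mathbb{R},\mathbb{R})$, $r\in\mathbb{N}\cup\{\infty\}$, satisfy for all $x\in\mathbb{R}$ that $\mathfrak{R}_r\in C^1(\mathbb{R},\mathbb{R})$ for all $r\in\mathbb{N}$, $\mathfrak{R}_\infty(x)=\max\{x,0\}$, $\sup_{r\in\mathbb{N}}\sup_{y\in[-|x|,|x|]}(|\mathfrak{R}_r(y)|+|(\mathfrak{R}_r)'(y)|)<\infty$, and $\limsup_{r\to\infty}\big(|\mathfrak{R}_r(x)-\mathfrak{R}_\infty(x)|+|(\mathfrak{R}_r)'(x)-\mathbb{1}_{(0,\infty)}(x)|\big)=0$. Let $\mu$ be a finite measure on $\mathcal{B}([\mathscr{a},\mathscr{b}]^d)$ which is absolutely continuous with respect to the Lebesgue measure on $[\mathscr{a},\mathscr{b}]^d$. For $r\in\mathbb{N}\cup\{\infty\}$ and $\theta=(\theta_1,\dots,\theta_{\mathfrak{d}})\in\mathbb{R}^{\mathfrak{d}}$ let $$\mathcal{L}_r(\theta)=\int_{[\mathscr{a},\mathscr{b}]^d}\Big(f(x_1,\dots,x_d)-\theta_{\mathfrak{d}}-\sum_{i=1}^H\theta_{H(d+1)+i}\,\mathfrak{R}_r\Big(\theta_{Hd+i}+\sum_{j=1}^d\theta_{(i-1)d+j}x_j\Big)\Big)^2\,\mu(\mathrm{d}(x_1,\dots,x_d)),$$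 let $\|\cdot\|$ be the standard Euclidean norm on $\mathbb{R}^{\mathfrak{d}}$, and let $\mathcal{G}\colon\mathbb{R}^{\mathfrak{d}}\to\mathbb{R}^{\mathfrak{d}}$ satisfy $\mathcal{G}(\theta)=\lim_{r\to\infty}(\nabla\mathcal{L}_r)(\theta)$ for every $\theta\in\mathbb{R}^{\mathfrak{d}}$ for which $((\nabla\mathcal{L}_r)(\theta))_{r\in\mathbb{N}}$ is convergent. Then: (i) $\mathcal{G}$ is locally bounded and measurable; (ii) $\mathbb{R}^{\mathfrak{d}}\ni\theta\mapsto\|\mathcal{G}(\theta)\|\in\mathbb{R}$ is lower semicontinuous; (iii) there exists an open $U\subseteq\mathbb{R}^{\mathfrak{d}}$ with $\int_{\mathbb{R}^{\mathfrak{d}}\setminus U}1\,\mathrm{d}x=0$, $(\mathcal{L}_\infty)|_U\in C^1(U,\mathbb{R})$, and $\nabla((\mathcal{L}_\infty)|_U)=\mathcal{G}|_U$; (iv) for every $\Theta\in C([0,\infty),\mathbb{R}^{\mathfrak{d}})$ with $\sup_{t\in[0,\infty)}\|\Theta_t\|<\infty$ and $\Theta_t=\Theta_0-\int_0^t\mathcal{G}(\Theta_s)\,\mathrm{d}s$ for all $t\in[0,\infty)$ there exists $\vartheta\in\mathcal{G}^{-1}(\{0\})$ such that $\limsup_{t\to\infty}\mathcal{L}_\infty(\Theta_t)=\mathcal{L}_\infty(\vartheta)$; (v) for every $\Theta\in C([0,\infty),\mathbb{R}^{\mathfrak{d}})$ with $\sup_{t\in[0,\infty)}\|\Theta_t\|<\infty$,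 $\Theta_t=\Theta_0-\int_0^t\mathcal{G}(\Theta_s)\,\mathrm{d}s$ for all $t\in[0,\infty)$, and $\mathcal{L}_\infty(\Theta_0)<\mathcal{L}_\infty(\theta)$ for all $\theta\in\mathcal{G}^{-1}(\{0\})\cap(\mathcal{L}_\infty)^{-1}((\inf_{\vartheta\in\mathbb{R}^{\mathfrak{d}}}\mathcal{L}_\infty(\vartheta),\infty))$, it holds that $\limsup_{t\to\infty}\mathcal{L}_\infty(\Theta_t)=\inf_{\vartheta\in\mathbb{R}^{\mathfrak{d}}}\mathcal{L}_\infty(\vartheta)$.
   Context: $\mathbb{1}_A$ denotes the indicator function of a set $A$. $\mathcal{G}^{-1}(\{0\})$ is the set of $\theta$ with $\mathcal{G}(\theta)=0$. *)

theory Defs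
  imports "HOL-Analysis.Analysis"
begin

definition gradient :: "('a::euclidean_space \<Rightarrow> real) \<Rightarrow> 'a \<Rightarrow> 'a" where
  "gradient F x = (THE g. (F has_derivative (\<lambda>h. g \<bullet> h)) (at x))"

definition lower_semicont :: "('a::topological_space \<Rightarrow> real) \<Rightarrow> bool" where
  "lower_semicont F \<longleftrightarrow> (\<forall>x. \<forall>e>0. \<forall>\<^sub>F y in at x. F x - e < F y)"

definition cube :: "real \<Rightarrow> real \<Rightarrow> (real^'d) set" where
  "cube a b = cbox (\<chi> i. a) (\<chi> i. b)"

text \<open>Risk of a shallow network with H hidden neurons and activation act.
  Parameter coordinates are numbered 1..dH+2H+1 via e, input coordinates 1..d via c.\<close>
definition nn_loss ::
  "(real^'d) measure \<Rightarrow> (real^'d \<Rightarrow> real) \<Rightarrow> nat \<Rightarrow> nat \<Rightarrow> (nat \<Rightarrow> 'n) \<Rightarrow> (nat \<Rightarrow> 'd)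
    \<Rightarrow> (real \<Rightarrow> real) \<Rightarrow> real^'n \<Rightarrow> real" where
  "nn_loss \<mu> f d H e c act \<theta> =
     (\<integral>x. (f x - \<theta> $ e (d*H + 2*H + 1)
        - (\<Sum>i=1..H. \<theta> $ e (H*(d+1) + i) *
             act (\<theta> $ e (H*d + i) + (\<Sum>j=1..d. \<theta> $ e ((i-1)*d + j) * x $ c j))))^2 \<partial>\<mu>)"

end

theory Submission
  imports Defs
begin

text \<open>For every \<open>r\<close> the loss \<open>\<L>\<^sub>r\<close> can be differentiated under the integral sign, and by
  dominated convergence its gradients converge pointwise to the integral \<open>\<G>\<close> of the formal
  gradient of the ReLU loss, in which \<open>\<one>\<^sub>(\<^sub>0\<^sub>,\<^sub>\<infinity>\<^sub>)\<close> stands for the derivative of \<open>max x 0\<close>.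
  A neuron whose inner weights and bias do not all vanish has a preactivation that vanishes only
  on a hyperplane, a \<open>\<mu>\<close>-null set by absolute continuity. Hence \<open>\<G>\<close> is continuous, and is the
  gradient of \<open>\<L>\<^sub>\<infinity>\<close>, on the open co-null set where every neuron is nondegenerate; at a
  degenerate neuron the components of \<open>\<G>\<close> belonging to its inner parameters vanish, while the
  remaining components stay continuous, which makes \<open>\<parallel>\<G>\<parallel>\<close> lower semicontinuous.

  A solution of \<open>\<Theta>' = -\<G>(\<Theta>)\<close> is Lipschitz, so the chain rule for \<open>\<L>\<^sub>r\<close> along \<open>\<Theta>\<close> and the
  limit \<open>r \<rightarrow> \<infinity>\<close> give the energy identity
  \<open>\<L>\<^sub>\<infinity>(\<Theta>\<^sub>t) + \<integral>\<^sub>0\<^sup>t \<parallel>\<G>(\<Theta>\<^sub>s)\<parallel>\<^sup>2 ds = \<L>\<^sub>\<infinity>(\<Theta>\<^sub>0)\<close>. Thus \<open>\<L>\<^sub>\<infinity>(\<Theta>\<^sub>t)\<close> decreases and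
  \<open>\<parallel>\<G>(\<Theta>\<^sub>t)\<parallel>\<close> becomes arbitrarily small at arbitrarily late times; by boundedness and lower
  semicontinuity these times have a subsequence along which \<open>\<Theta>\<close> converges to a critical point
  \<open>\<vartheta>\<close>, and \<open>\<L>\<^sub>\<infinity>(\<Theta>\<^sub>t) \<rightarrow> \<L>\<^sub>\<infinity>(\<vartheta>)\<close>.\<close>

section \<open>Parametric integrals\<close>

lemma tendsto_integral_at_dominated:
  fixes F :: "'a::metric_space \<Rightarrow> 'b \<Rightarrow> real"
  assumes fin: "finite_measure M"
    and meas: "\<And>y. F y \<in> borel_measurable M" and l_meas: "l \<in> borel_measurable M"
    and lim: "AE x in M. ((\<lambda>y. F y x) \<longlongrightarrow> l x) (at y0)"
    and \<rho>: "\<rho> > 0"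
    and bound: "\<And>y x. y \<noteq> y0 \<Longrightarrow> dist y y0 < \<rho> \<Longrightarrow> x \<in> space M \<Longrightarrow> \<bar>F y x\<bar> \<le> C"
  shows "((\<lambda>y. \<integral>x. F y x \<partial>M) \<longlongrightarrow> (\<integral>x. l x \<partial>M)) (at y0)"
  unfolding tendsto_at_iff_sequentially comp_def
proof (intro allI impI)
  fix X assume X_ne: "\<forall>n. X n \<in> UNIV - {y0}" and X: "X \<longlonglongrightarrow> y0"
  then obtain N where N: "\<And>n. n \<ge> N \<Longrightarrow> dist (X n) y0 < \<rho>"
    using \<rho> by (metis eventually_sequentially tendsto_iff)
  have "(\<lambda>n. \<integral>x. F (X (n + N)) x \<partial>M) \<longlonglongrightarrow> (\<integral>x. l x \<partial>M)"
  proof (rule integral_dominated_convergence[where w="\<lambda>_. C"])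
    show "integrable M (\<lambda>_. C)"
      using fin finite_measure.integrable_const by blast
    have "(\<lambda>n. X (n + N)) \<longlonglongrightarrow> y0"
      using X by (rule LIMSEQ_ignore_initial_segment)
    then show "AE x in M. (\<lambda>n. F (X (n + N)) x) \<longlonglongrightarrow> l x"
      using lim X_ne unfolding tendsto_at_iff_sequentially comp_def by auto
    show "AE x in M. norm (F (X (n + N)) x) \<le> C" for n
      using N[of "n + N"] X_ne bound by auto
  qed (use meas l_meas in auto)
  then show "(\<lambda>n. \<integral>x. F (X n) x \<partial>M) \<longlonglongrightarrow> (\<integral>x. l x \<partial>M)"
    by (rule LIMSEQ_offset)
qed

lemma isCont_integral_dominated:
  fixes F :: "'a::metric_space \<Rightarrow> 'b \<Rightarrow> real"
  assumes "finite_measure M" and "\<And>\<theta>. F \<theta> \<in> borel_measurable M"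
    and "AE x in M. isCont (\<lambda>\<theta>. F \<theta> x) \<theta>0"
    and "\<rho> > 0" and "\<And>\<theta> x. dist \<theta> \<theta>0 < \<rho> \<Longrightarrow> x \<in> space M \<Longrightarrow> \<bar>F \<theta> x\<bar> \<le> C"
  shows "isCont (\<lambda>\<theta>. \<integral>x. F \<theta> x \<partial>M) \<theta>0"
  unfolding isCont_def
  by (rule tendsto_integral_at_dominated[where l="F \<theta>0"]) (use assms in \<open>auto simp: isCont_def\<close>)

lemma norm_integral_le_const:
  fixes g :: "'a \<Rightarrow> 'b::{banach, second_countable_topology}"
  assumes "finite_measure M" "integrable M g" "\<And>x. x \<in> space M \<Longrightarrow> norm (g x) \<le> C"
  shows "norm (\<integral>x. g x \<partial>M) \<le> C * measure M (space M)"
proof -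
  have "norm (\<integral>x. g x \<partial>M) \<le> (\<integral>x. norm (g x) \<partial>M)" by (rule integral_norm_bound)
  also have "\<dots> \<le> (\<integral>x. C \<partial>M)"
    using assms by (intro integral_mono) (auto intro: finite_measure.integrable_const)
  also have "\<dots> = C * measure M (space M)" by simp
  finally show ?thesis .
qed

lemma has_derivative_integral_dominated:
  fixes F :: "'a::euclidean_space \<Rightarrow> 'b \<Rightarrow> real" and g :: "'b \<Rightarrow> 'a"
  assumes fin: "finite_measure M"
    and meas: "\<And>\<theta>. F \<theta> \<in> borel_measurable M" and int: "\<And>\<theta>. integrable M (F \<theta>)"
    and g_meas: "g \<in> borel_measurable M"
    and der: "AE x in M. ((\<lambda>\<theta>. F \<theta> x) has_derivative (\<lambda>h. g x \<bullet> h)) (at \<theta>0)"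
    and lip: "\<And>x h. x \<in> space M \<Longrightarrow> norm h \<le> 1 \<Longrightarrow> \<bar>F (\<theta>0 + h) x - F \<theta>0 x\<bar> \<le> C * norm h"
    and g_bound: "\<And>x. x \<in> space M \<Longrightarrow> norm (g x) \<le> C"
  shows "((\<lambda>\<theta>. \<integral>x. F \<theta> x \<partial>M) has_derivative (\<lambda>h. (\<integral>x. g x \<partial>M) \<bullet> h)) (at \<theta>0)"
proof -
  have int_g: "integrable M g"
    using g_bound g_meas fin
    by (intro finite_measure.integrable_const_bound[where B=C]) auto
  define Q where "Q y x = (F y x - F \<theta>0 x - g x \<bullet> (y - \<theta>0)) / norm (y - \<theta>0)" for y x
  have quotient_eq: "((\<integral>x. F y x \<partial>M) - (\<integral>x. F \<theta>0 x \<partial>M) - (\<integral>x. g x \<partial>M) \<bullet> (y - \<theta>0))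
      /\<^sub>R norm (y - \<theta>0) = (\<integral>x. Q y x \<partial>M)" for y
  proof -
    have "(\<integral>x. F y x - F \<theta>0 x - g x \<bullet> (y - \<theta>0) \<partial>M)
        = (\<integral>x. F y x \<partial>M) - (\<integral>x. F \<theta>0 x \<partial>M) - (\<integral>x. g x \<partial>M) \<bullet> (y - \<theta>0)"
      using int[of y] int[of \<theta>0] int_g by (simp add: integral_diff)
    then show ?thesis
      unfolding Q_def by (simp add: divide_inverse)
  qed
  have Q_bound: "\<bar>Q y x\<bar> \<le> 2 * C" if "y \<noteq> \<theta>0" "dist y \<theta>0 < 1" "x \<in> space M" for y x
  proof -
    define h where "h = y - \<theta>0"
    have h: "0 < norm h" "norm h \<le> 1" "y = \<theta>0 + h"
      using that by (auto simp: h_def dist_norm)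
    have "\<bar>g x \<bullet> h\<bar> \<le> C * norm h"
      using Cauchy_Schwarz_ineq2[of "g x" h] g_bound[OF that(3)] mult_right_mono[of _ C "norm h"]
      by fastforce
    then have "\<bar>F (\<theta>0 + h) x - F \<theta>0 x - g x \<bullet> h\<bar> \<le> 2 * C * norm h"
      using lip[OF that(3) h(2)] by linarith
    then show ?thesis
      using h(1) unfolding Q_def h_def[symmetric] h(3) by (simp add: abs_divide divide_le_eq)
  qed
  have "((\<lambda>y. \<integral>x. Q y x \<partial>M) \<longlongrightarrow> (\<integral>x. 0 \<partial>M)) (at \<theta>0)"
  proof (rule tendsto_integral_at_dominated[where \<rho>=1, OF fin _ _ _ _ Q_bound])
    show "(\<lambda>x. Q y x) \<in> borel_measurable M" for y
      unfolding Q_def using meas g_meas by measurable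
    show "AE x in M. ((\<lambda>y. Q y x) \<longlongrightarrow> 0) (at \<theta>0)"
      using der
    proof eventually_elim
      case (elim x)
      then have "((\<lambda>y. (F y x - F \<theta>0 x - g x \<bullet> (y - \<theta>0)) /\<^sub>R norm (y - \<theta>0)) \<longlongrightarrow> 0) (at \<theta>0)"
        by (simp add: has_derivative_at_within)
      then show ?case
        unfolding Q_def by (simp add: divide_inverse mult.commute)
    qed
  qed auto
  then show ?thesis
    unfolding has_derivative_at_within using quotient_eq by (simp add: bounded_linear_inner_right)
qed

lemma linear_eq_inner_axis:
  fixes l :: "real^'n \<Rightarrow> real"
  assumes "linear l"
  shows "l h = (\<chi> k. l (axis k 1)) \<bullet> h"
proof -
  have "l h = l (\<Sum>k\<in>UNIV. h $ k *\<^sub>R axis k 1)"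
    using basis_expansion[of h] by (simp add: scalar_mult_eq_scaleR)
  also have "\<dots> = (\<Sum>k\<in>UNIV. h $ k * l (axis k 1))"
    using assms by (simp add: linear_sum linear_scale)
  also have "\<dots> = (\<chi> k. l (axis k 1)) \<bullet> h"
    by (simp add: inner_vec_def mult.commute)
  finally show ?thesis .
qed

lemma gradient_eqI:
  fixes F :: "'a::euclidean_space \<Rightarrow> real"
  assumes "(F has_derivative (\<lambda>h. g \<bullet> h)) (at x)"
  shows "gradient F x = g"
  unfolding gradient_def
proof (rule the_equality)
  show "(F has_derivative (\<lambda>h. g \<bullet> h)) (at x)" by fact
  fix g' assume "(F has_derivative (\<lambda>h. g' \<bullet> h)) (at x)"
  from has_derivative_unique[OF this assms] have eq: "(\<lambda>h. g' \<bullet> h) = (\<lambda>h. g \<bullet> h)" .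
  show "g' = g"
  proof (rule euclidean_eqI)
    fix b :: 'a show "g' \<bullet> b = g \<bullet> b" using fun_cong[OF eq, of b] by simp
  qed
qed

lemma borel_measurable_vecI:
  fixes g :: "'a \<Rightarrow> real^'n"
  assumes "\<And>k. (\<lambda>x. g x $ k) \<in> borel_measurable M"
  shows "g \<in> borel_measurable M"
  by (subst borel_measurable_euclidean_space) (auto simp: Basis_vec_def inner_axis assms)

lemma integral_vec_nth:
  fixes g :: "'a \<Rightarrow> real^'n"
  assumes "integrable M g"
  shows "(\<integral>x. g x \<partial>M) $ k = (\<integral>x. g x $ k \<partial>M)"
proof -
  have "(\<integral>x. g x \<partial>M) \<bullet> axis k 1 = (\<integral>x. g x \<bullet> axis k 1 \<partial>M)"
    using assms by simp
  then show ?thesis by (simp add: inner_axis)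
qed

lemma borel_measurable_vec_nth: "g \<in> borel_measurable M \<Longrightarrow> (\<lambda>x. g x $ k) \<in> borel_measurable M"
  for g :: "'a \<Rightarrow> real^'n"
proof -
  assume g: "g \<in> borel_measurable M"
  have "(\<lambda>v::real^'n. v $ k) \<in> borel_measurable borel"
    by (rule borel_measurable_continuous_onI) (intro continuous_intros)
  from measurable_compose[OF g this] show ?thesis .
qed

lemma norm_vec_sq: "norm (v::real^'n) = sqrt (\<Sum>k\<in>UNIV. (v$k)\<^sup>2)"
  by (simp add: norm_vec_def L2_set_def)

lemma isCont_vecI:
  fixes F :: "'a::t2_space \<Rightarrow> real^'n"
  assumes "\<And>k. isCont (\<lambda>\<theta>. F \<theta> $ k) \<theta>0"
  shows "isCont F \<theta>0"
  using assms unfolding continuous_at by (intro vec_tendstoI) auto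

lemma bounded_measurable_integrable_on_Icc:
  fixes f :: "real \<Rightarrow> 'b::euclidean_space"
  assumes meas: "f \<in> borel_measurable borel" and bnd: "\<And>x. norm (f x) \<le> B"
  shows "f integrable_on {a..b}"
proof -
  have "set_integrable lborel {a..b} f"
    unfolding set_integrable_def
  proof (rule integrableI_bounded_set[where A="{a..b}" and B=B])
    show "{a..b} \<in> sets lborel" by simp
    show "(\<lambda>x. indicator {a..b} x *\<^sub>R f x) \<in> borel_measurable lborel" using meas by simp
    show "emeasure lborel {a..b} < \<infinity>" by (simp add: emeasure_lborel_Icc_eq)
    show "AE x in lborel. x \<in> {a..b} \<longrightarrow> norm (indicator {a..b} x *\<^sub>R f x) \<le> B"
      using bnd by (auto intro!: AE_I2)
    show "AE x in lborel. x \<notin> {a..b} \<longrightarrow> indicator {a..b} x *\<^sub>R f x = 0"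
      by (auto intro!: AE_I2)
  qed
  then show ?thesis by (rule set_borel_integral_eq_integral(1))
qed

lemma lipschitz_chain_remainder:
  fixes F :: "'a::real_normed_vector \<Rightarrow> real" and \<Theta> :: "real \<Rightarrow> 'a"
  assumes der: "(F has_derivative D) (at (\<Theta> t))"
    and lip: "\<And>u. u \<in> S \<Longrightarrow> norm (\<Theta> u - \<Theta> t) \<le> M * \<bar>u - t\<bar>" and M: "M \<ge> 0"
  shows "((\<lambda>u. F (\<Theta> u) - D (\<Theta> u)) has_field_derivative 0) (at t within S)"
  unfolding has_field_derivative_def has_derivative_within_alt
proof (intro conjI allI impI)
  show "bounded_linear ((*) (0::real))" by (rule bounded_linear_mult_right)
  have bl: "bounded_linear D" using der by (rule has_derivative_bounded_linear)
  fix \<epsilon> :: real assume e: "\<epsilon> > 0"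
  have e': "\<epsilon> / (M + 1) > 0" using e M by simp
  obtain d' where d': "d' > 0" "\<And>y. norm (y - \<Theta> t) < d' \<Longrightarrow>
      norm (F y - F (\<Theta> t) - D (y - \<Theta> t)) \<le> \<epsilon> / (M + 1) * norm (y - \<Theta> t)"
    using der[unfolded has_derivative_at_alt] e' by blast
  show "\<exists>d>0. \<forall>y\<in>S. norm (y - t) < d \<longrightarrow>
      norm (F (\<Theta> y) - D (\<Theta> y) - (F (\<Theta> t) - D (\<Theta> t)) - 0 * (y - t)) \<le> \<epsilon> * norm (y - t)"
  proof (intro exI[of _ "d' / (M + 1)"] conjI ballI impI)
    show "d' / (M + 1) > 0" using d' M by simp
    fix y assume y: "y \<in> S" and yd: "norm (y - t) < d' / (M + 1)"
    have "norm (\<Theta> y - \<Theta> t) \<le> M * \<bar>y - t\<bar>" by (rule lip[OF y])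
    also have "\<dots> \<le> (M + 1) * \<bar>y - t\<bar>" by (simp add: mult_right_mono)
    also have "\<dots> < d'" using yd M by (simp add: field_simps)
    finally have c: "norm (\<Theta> y - \<Theta> t) < d'" .
    have lin: "D (\<Theta> y) - D (\<Theta> t) = D (\<Theta> y - \<Theta> t)"
      using bl by (simp add: linear_diff bounded_linear.linear)
    have "\<bar>F (\<Theta> y) - D (\<Theta> y) - (F (\<Theta> t) - D (\<Theta> t))\<bar> = \<bar>F (\<Theta> y) - F (\<Theta> t) - D (\<Theta> y - \<Theta> t)\<bar>"
      using lin by (simp add: algebra_simps)
    also have "\<dots> \<le> \<epsilon> / (M + 1) * norm (\<Theta> y - \<Theta> t)" using d'(2)[OF c] by simp
    also have "\<dots> \<le> \<epsilon> / (M + 1) * (M * \<bar>y - t\<bar>)" using lip[OF y] e' by (intro mult_left_mono) auto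
    also have "\<dots> \<le> \<epsilon> * \<bar>y - t\<bar>"
    proof -
      have "M / (M + 1) \<le> 1" using M by simp
      then have "\<epsilon> * (M / (M + 1)) * \<bar>y - t\<bar> \<le> \<epsilon> * 1 * \<bar>y - t\<bar>"
        using e by (intro mult_right_mono mult_left_mono) auto
      then show ?thesis by (simp add: field_simps)
    qed
    finally show "norm (F (\<Theta> y) - D (\<Theta> y) - (F (\<Theta> t) - D (\<Theta> t)) - 0 * (y - t)) \<le> \<epsilon> * norm (y - t)"
      by simp
  qed
qed

abbreviation relu :: "real \<Rightarrow> real" where
  "relu \<equiv> \<lambda>y. max y 0"

abbreviation heaviside :: "real \<Rightarrow> real" where
  "heaviside \<equiv> indicator {0<..}"

lemma relu_has_real_derivative: "y \<noteq> 0 \<Longrightarrow> (relu has_real_derivative heaviside y) (at y)"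
proof -
  assume y: "y \<noteq> 0"
  show ?thesis
  proof (cases "y > 0")
    case True
    have ev: "\<forall>\<^sub>F z in nhds y. max z 0 = z"
      using eventually_nhds_in_open[of "{0<..}" y] True by (auto elim!: eventually_mono)
    have "((\<lambda>z. z) has_real_derivative 1) (at y)" by (rule DERIV_ident)
    then show ?thesis using DERIV_cong_ev[OF refl ev, of 1 1] True by simp
  next
    case False
    then have yn: "y < 0" using y by simp
    have ev: "\<forall>\<^sub>F z in nhds y. max z 0 = 0"
      using eventually_nhds_in_open[of "{..<0}" y] yn by (auto elim!: eventually_mono)
    have "((\<lambda>z. 0::real) has_real_derivative 0) (at y)" by (rule DERIV_const)
    then show ?thesis using DERIV_cong_ev[OF refl ev, of 0 0] yn by simp
  qed
qed

lemma isCont_heaviside: "y \<noteq> 0 \<Longrightarrow> isCont heaviside y"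
  by (simp add: isCont_indicator frontier_def interior_open)

section \<open>Shallow networks\<close>

lemma abs_neuron_term_le:
  fixes v v' y z n B \<rho> \<kappa> :: real
  assumes "\<bar>v'\<bar> \<le> n" "\<bar>y\<bar> \<le> B" "\<bar>v\<bar> \<le> \<rho>" "\<bar>z\<bar> \<le> B * (n * \<kappa>)"
  shows "\<bar>v' * y + v * z\<bar> \<le> n * (B + \<rho> * (B * \<kappa>))"
proof -
  have "\<bar>v' * y\<bar> \<le> n * B" "\<bar>v * z\<bar> \<le> \<rho> * (B * (n * \<kappa>))"
    unfolding abs_mult using assms by (auto intro!: mult_mono order_trans[OF abs_ge_zero])
  then have "\<bar>v' * y + v * z\<bar> \<le> n * B + \<rho> * (B * (n * \<kappa>))"
    using abs_triangle_ineq[of "v' * y" "v * z"] by linarith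
  then show ?thesis
    by (simp add: algebra_simps)
qed

lemma mult_add_less_inj:
  fixes p p' q q' d :: nat
  assumes "q < d" "q' < d" "p * d + q = p' * d + q'"
  shows "p = p'"
proof -
  have "(q + p * d) div d = p" "(q' + p' * d) div d = p'"
    using assms(1,2) by simp_all
  then show ?thesis
    using assms(3) by (metis add.commute)
qed

locale shallow_net =
  fixes d H :: nat and e :: "nat \<Rightarrow> 'n::finite" and c :: "nat \<Rightarrow> 'd::finite"
    and a b :: real and f :: "real^'d \<Rightarrow> real" and \<mu> :: "(real^'d) measure"
  assumes e_bij: "bij_betw e {1..d*H + 2*H + 1} UNIV"
    and c_bij: "bij_betw c {1..d} UNIV"
    and f_cont: "continuous_on (cube a b) f"
    and mu_sets: "sets \<mu> = sets (restrict_space lborel (cube a b))"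
    and mu_fin: "finite_measure \<mu>"
    and mu_ac: "absolutely_continuous (restrict_space lborel (cube a b)) \<mu>"
begin

abbreviation inner_weight :: "real^'n \<Rightarrow> nat \<Rightarrow> nat \<Rightarrow> real" where
  "inner_weight \<theta> i j \<equiv> \<theta> $ e ((i-1)*d + j)"

abbreviation inner_bias :: "real^'n \<Rightarrow> nat \<Rightarrow> real" where
  "inner_bias \<theta> i \<equiv> \<theta> $ e (H*d + i)"

abbreviation outer_weight :: "real^'n \<Rightarrow> nat \<Rightarrow> real" where
  "outer_weight \<theta> i \<equiv> \<theta> $ e (H*(d+1) + i)"

abbreviation outer_bias :: "real^'n \<Rightarrow> real" where
  "outer_bias \<theta> \<equiv> \<theta> $ e (d*H + 2*H + 1)"

definition preact :: "real^'n \<Rightarrow> real^'d \<Rightarrow> nat \<Rightarrow> real" where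
  "preact \<theta> x i = inner_bias \<theta> i + (\<Sum>j=1..d. inner_weight \<theta> i j * x$c j)"

definition net_output :: "(real \<Rightarrow> real) \<Rightarrow> real^'n \<Rightarrow> real^'d \<Rightarrow> real" where
  "net_output \<sigma> \<theta> x = outer_bias \<theta> + (\<Sum>i=1..H. outer_weight \<theta> i * \<sigma> (preact \<theta> x i))"

text \<open>The argument \<open>\<sigma>'\<close> plays the role of the derivative of \<open>\<sigma>\<close>; for the ReLU it is taken to be
  \<open>\<one>\<^sub>(\<^sub>0\<^sub>,\<^sub>\<infinity>\<^sub>)\<close>, which makes \<open>sq_error_grad\<close> the formal gradient whose integral is \<open>\<G>\<close>.\<close>

definition net_output_deriv ::
    "(real \<Rightarrow> real) \<Rightarrow> (real \<Rightarrow> real) \<Rightarrow> real^'n \<Rightarrow> real^'d \<Rightarrow> real^'n \<Rightarrow> real" where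
  "net_output_deriv \<sigma> \<sigma>' \<theta> x h = outer_bias h + (\<Sum>i=1..H. outer_weight h i * \<sigma> (preact \<theta> x i)
        + outer_weight \<theta> i * (\<sigma>' (preact \<theta> x i) * preact h x i))"

definition sq_error :: "(real \<Rightarrow> real) \<Rightarrow> real^'n \<Rightarrow> real^'d \<Rightarrow> real" where
  "sq_error \<sigma> \<theta> x = (f x - net_output \<sigma> \<theta> x)\<^sup>2"

definition sq_error_grad :: "(real \<Rightarrow> real) \<Rightarrow> (real \<Rightarrow> real) \<Rightarrow> real^'n \<Rightarrow> real^'d \<Rightarrow> real^'n" where
  "sq_error_grad \<sigma> \<sigma>' \<theta> x =
     (\<chi> k. -2 * (f x - net_output \<sigma> \<theta> x) * net_output_deriv \<sigma> \<sigma>' \<theta> x (axis k 1))"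

lemma nn_loss_eq: "nn_loss \<mu> f d H e c \<sigma> \<theta> = (\<integral>x. sq_error \<sigma> \<theta> x \<partial>\<mu>)"
  unfolding nn_loss_def sq_error_def net_output_def preact_def by (simp add: diff_diff_eq)

lemma space_mu: "space \<mu> = cube a b"
  using sets_eq_imp_space_eq[OF mu_sets] by (simp add: space_restrict_space)

lemma measurable_mu: "g \<in> borel_measurable borel \<Longrightarrow> g \<in> borel_measurable \<mu>"
  by (subst measurable_cong_sets[OF mu_sets refl], rule measurable_restrict_space1) simp

lemma f_measurable: "f \<in> borel_measurable \<mu>"
proof -
  have "f \<in> borel_measurable (restrict_space borel (cube a b))"
    using f_cont by (rule borel_measurable_continuous_on_restrict)
  then show ?thesis
    by (subst measurable_cong_sets[OF mu_sets refl],
        subst measurable_cong_sets[OF sets_restrict_space_cong[OF sets_lborel] refl])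
qed

definition input_bound :: real where
  "input_bound = \<bar>a\<bar> + \<bar>b\<bar>"

lemma cube_component_bound: "x \<in> cube a b \<Longrightarrow> \<bar>x $ k\<bar> \<le> input_bound"
  unfolding cube_def input_bound_def mem_box_cart by (drule spec[of _ k]) auto

lemma input_bound_nonneg: "input_bound \<ge> 0" by (simp add: input_bound_def)

lemma target_bound_exists: "\<exists>B\<ge>0. \<forall>x\<in>cube a b. \<bar>f x\<bar> \<le> B"
proof -
  have "compact (f ` cube a b)"
    unfolding cube_def
    by (rule compact_continuous_image[OF _ compact_cbox]) (use f_cont in \<open>simp add: cube_def\<close>)
  then obtain B where "\<forall>y\<in>f ` cube a b. norm y \<le> B"
    using compact_imp_bounded bounded_iff by metis
  then show ?thesis by (intro exI[of _ "max B 0"]) auto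
qed

lemma preact_add: "preact (\<theta> + h) x i = preact \<theta> x i + preact h x i"
  by (simp add: preact_def algebra_simps sum.distrib)

lemma preact_scale: "preact (r *\<^sub>R h) x i = r * preact h x i"
  by (simp add: preact_def algebra_simps sum_distrib_left)

lemma preact_diff: "preact (\<theta> - h) x i = preact \<theta> x i - preact h x i"
  by (simp add: preact_def algebra_simps sum_subtractf)

lemma abs_preact_le:
  assumes "x \<in> cube a b"
  shows "\<bar>preact \<theta> x i\<bar> \<le> norm \<theta> * (1 + real d * input_bound)"
proof -
  have "\<bar>\<Sum>j=1..d. inner_weight \<theta> i j * x$c j\<bar> \<le> (\<Sum>j=1..d. norm \<theta> * input_bound)"
  proof (rule order_trans[OF sum_abs], rule sum_mono)
    fix j
    show "\<bar>inner_weight \<theta> i j * x$c j\<bar> \<le> norm \<theta> * input_bound"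
      unfolding abs_mult
      by (rule mult_mono[OF component_le_norm_cart cube_component_bound[OF assms]]) auto
  qed
  then have "\<bar>\<Sum>j=1..d. inner_weight \<theta> i j * x$c j\<bar> \<le> norm \<theta> * (real d * input_bound)"
    by (simp add: mult.left_commute)
  moreover have "\<bar>inner_bias \<theta> i\<bar> \<le> norm \<theta>" by (rule component_le_norm_cart)
  moreover have "norm \<theta> * (real d * input_bound) = real d * (norm \<theta> * input_bound)" by simp
  ultimately show ?thesis unfolding preact_def by (simp add: algebra_simps)
qed

lemma continuous_on_preact: "continuous_on UNIV (\<lambda>\<theta>. preact \<theta> x i)"
  unfolding preact_def by (intro continuous_intros)

lemma preact_measurable: "(\<lambda>x. preact \<theta> x i) \<in> borel_measurable \<mu>"
proof -
  have [measurable]: "(\<lambda>x. x $ k) \<in> borel_measurable \<mu>" for k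
    by (rule measurable_mu, rule borel_measurable_continuous_onI) (intro continuous_intros)
  show ?thesis
    unfolding preact_def by measurable
qed

lemma has_derivative_preact: "((\<lambda>\<theta>. preact \<theta> x i) has_derivative (\<lambda>h. preact h x i)) (at \<theta>)"
proof -
  have "linear (\<lambda>h. preact h x i)"
    by (rule linearI) (simp_all add: preact_add preact_scale)
  then have "bounded_linear (\<lambda>h. preact h x i)" by (simp add: linear_conv_bounded_linear)
  then show ?thesis by (rule bounded_linear_imp_has_derivative)
qed

lemma linear_net_output_deriv: "linear (net_output_deriv \<sigma> \<sigma>' \<theta> x)"
  by (rule linearI)
     (simp_all add: net_output_deriv_def preact_add preact_scale algebra_simps sum.distrib sum_distrib_left)

lemma has_derivative_net_output:
  assumes "\<And>i. i \<in> {1..H} \<Longrightarrow> (\<sigma> has_real_derivative \<sigma>' (preact \<theta> x i)) (at (preact \<theta> x i))"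
  shows "((\<lambda>\<theta>. net_output \<sigma> \<theta> x) has_derivative net_output_deriv \<sigma> \<sigma>' \<theta> x) (at \<theta>)"
proof -
  have s: "((\<lambda>\<theta>. \<sigma> (preact \<theta> x i)) has_derivative (\<lambda>h. \<sigma>' (preact \<theta> x i) * preact h x i)) (at \<theta>)"
    if "i \<in> {1..H}" for i
  proof -
    have "(\<sigma> has_derivative (\<lambda>t. \<sigma>' (preact \<theta> x i) * t)) (at (preact \<theta> x i))"
      using assms[OF that] by (simp add: has_field_derivative_def)
    from has_derivative_compose[OF has_derivative_preact this] show ?thesis .
  qed
  have "((\<lambda>\<theta>. outer_bias \<theta> + (\<Sum>i=1..H. outer_weight \<theta> i * \<sigma> (preact \<theta> x i))) has_derivative
     (\<lambda>h. outer_bias h + (\<Sum>i=1..H. outer_weight \<theta> i * (\<sigma>' (preact \<theta> x i) * preact h x i)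
        + outer_weight h i * \<sigma> (preact \<theta> x i)))) (at \<theta>)"
    by (intro has_derivative_add has_derivative_sum has_derivative_mult s
        bounded_linear_imp_has_derivative bounded_linear_vec_nth) auto
  then show ?thesis
    unfolding net_output_def net_output_deriv_def by (simp add: add.commute)
qed

lemma has_derivative_sq_error:
  assumes "\<And>i. i \<in> {1..H} \<Longrightarrow> (\<sigma> has_real_derivative \<sigma>' (preact \<theta> x i)) (at (preact \<theta> x i))"
  shows "((\<lambda>\<theta>. sq_error \<sigma> \<theta> x) has_derivative (\<lambda>h. sq_error_grad \<sigma> \<sigma>' \<theta> x \<bullet> h)) (at \<theta>)"
proof -
  define r where "r = f x - net_output \<sigma> \<theta> x"
  define D where "D = net_output_deriv \<sigma> \<sigma>' \<theta> x"
  have "((\<lambda>\<theta>. (f x - net_output \<sigma> \<theta> x) * (f x - net_output \<sigma> \<theta> x))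
      has_derivative (\<lambda>h. r * (0 - D h) + (0 - D h) * r)) (at \<theta>)"
    unfolding r_def D_def
    by (intro has_derivative_mult has_derivative_diff has_derivative_const has_derivative_net_output[OF assms])
  moreover have "r * (0 - D h) + (0 - D h) * r = sq_error_grad \<sigma> \<sigma>' \<theta> x \<bullet> h" for h
  proof -
    have "linear (\<lambda>h. -2 * r * D h)"
      using linear_net_output_deriv[of \<sigma> \<sigma>' \<theta> x] unfolding D_def by (simp add: linear_iff algebra_simps)
    from linear_eq_inner_axis[OF this, of h] show ?thesis
      unfolding sq_error_grad_def r_def D_def by (simp add: algebra_simps)
  qed
  ultimately show ?thesis
    unfolding sq_error_def power2_eq_square by simp
qed

definition act_bounds :: "(real \<Rightarrow> real) \<Rightarrow> (real \<Rightarrow> real) \<Rightarrow> real \<Rightarrow> real \<Rightarrow> bool" where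
  "act_bounds \<sigma> \<sigma>' K B \<longleftrightarrow> (\<forall>y. \<bar>y\<bar> \<le> K \<longrightarrow> \<bar>\<sigma> y\<bar> \<le> B \<and> \<bar>\<sigma>' y\<bar> \<le> B) \<and>
     (\<forall>y z. \<bar>y\<bar> \<le> K \<longrightarrow> \<bar>z\<bar> \<le> K \<longrightarrow> \<bar>\<sigma> y - \<sigma> z\<bar> \<le> B * \<bar>y - z\<bar>)"

definition preact_radius :: "real \<Rightarrow> real" where
  "preact_radius \<rho> = \<rho> * (1 + real d * input_bound)"

definition target_bound :: real where
  "target_bound = (SOME F. F \<ge> 0 \<and> (\<forall>x\<in>cube a b. \<bar>f x\<bar> \<le> F))"

lemma target_bound: "target_bound \<ge> 0" "x \<in> cube a b \<Longrightarrow> \<bar>f x\<bar> \<le> target_bound"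
  using someI_ex[OF target_bound_exists[unfolded Bex_def]] unfolding target_bound_def by auto

definition output_lip :: "real \<Rightarrow> real \<Rightarrow> real" where
  "output_lip \<rho> B = 1 + real H * (B + \<rho> * (B * (1 + real d * input_bound)))"

definition error_bound :: "real \<Rightarrow> real \<Rightarrow> real" where
  "error_bound \<rho> B = target_bound + \<rho> + real H * (\<rho> * B)"

lemma abs_preact_le_radius: "x \<in> cube a b \<Longrightarrow> norm \<theta> \<le> \<rho> \<Longrightarrow> \<bar>preact \<theta> x i\<bar> \<le> preact_radius \<rho>"
proof -
  assume x: "x \<in> cube a b" and th: "norm \<theta> \<le> \<rho>"
  have "norm \<theta> * (1 + real d * input_bound) \<le> \<rho> * (1 + real d * input_bound)"
    using th input_bound_nonneg by (intro mult_right_mono) auto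
  then show ?thesis unfolding preact_radius_def using abs_preact_le[OF x, of \<theta> i] by linarith
qed

lemma act_bounds_nonneg: "act_bounds \<sigma> \<sigma>' K B \<Longrightarrow> K \<ge> 0 \<Longrightarrow> B \<ge> 0"
proof -
  assume "act_bounds \<sigma> \<sigma>' K B" "K \<ge> 0"
  then have "\<bar>\<sigma> 0\<bar> \<le> B" unfolding act_bounds_def by auto
  then show "B \<ge> 0" by (rule order_trans[OF abs_ge_zero])
qed

lemma preact_radius_nonneg: "\<rho> \<ge> 0 \<Longrightarrow> preact_radius \<rho> \<ge> 0"
  unfolding preact_radius_def using input_bound_nonneg by simp

lemma abs_net_output_le:
  assumes x: "x \<in> cube a b" and th: "norm \<theta> \<le> \<rho>" and A: "act_bounds \<sigma> \<sigma>' (preact_radius \<rho>) B"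
  shows "\<bar>net_output \<sigma> \<theta> x\<bar> \<le> \<rho> + real H * (\<rho> * B)"
proof -
  have t: "\<bar>outer_weight \<theta> i * \<sigma> (preact \<theta> x i)\<bar> \<le> \<rho> * B" for i
  proof -
    have "\<bar>\<sigma> (preact \<theta> x i)\<bar> \<le> B" using A abs_preact_le_radius[OF x th] unfolding act_bounds_def by blast
    moreover have "\<bar>outer_weight \<theta> i\<bar> \<le> \<rho>" using component_le_norm_cart th by (rule order_trans)
    ultimately show ?thesis unfolding abs_mult by (intro mult_mono) auto
  qed
  have "\<bar>\<Sum>i=1..H. outer_weight \<theta> i * \<sigma> (preact \<theta> x i)\<bar> \<le> (\<Sum>i=1..H. \<rho> * B)"
    by (rule order_trans[OF sum_abs sum_mono[OF t]])
  moreover have "\<bar>outer_bias \<theta>\<bar> \<le> \<rho>" using component_le_norm_cart th by (rule order_trans)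
  ultimately show ?thesis unfolding net_output_def by simp
qed

lemma abs_error_le:
  assumes x: "x \<in> cube a b" and th: "norm \<theta> \<le> \<rho>" and A: "act_bounds \<sigma> \<sigma>' (preact_radius \<rho>) B"
  shows "\<bar>f x - net_output \<sigma> \<theta> x\<bar> \<le> error_bound \<rho> B"
  using abs_net_output_le[OF assms] target_bound(2)[OF x] unfolding error_bound_def by linarith

lemma abs_sq_error_le:
  assumes x: "x \<in> cube a b" and th: "norm \<theta> \<le> \<rho>" and A: "act_bounds \<sigma> \<sigma>' (preact_radius \<rho>) B"
  shows "\<bar>sq_error \<sigma> \<theta> x\<bar> \<le> (error_bound \<rho> B)\<^sup>2"
  using power_mono[OF abs_error_le[OF assms] abs_ge_zero, of 2] unfolding sq_error_def by simp

lemma abs_net_output_deriv_le: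
  assumes x: "x \<in> cube a b" and th: "norm \<theta> \<le> \<rho>" and A: "act_bounds \<sigma> \<sigma>' (preact_radius \<rho>) B"
  shows "\<bar>net_output_deriv \<sigma> \<sigma>' \<theta> x h\<bar> \<le> norm h * output_lip \<rho> B"
proof -
  have "\<bar>outer_weight h i * \<sigma> (preact \<theta> x i) + outer_weight \<theta> i * (\<sigma>' (preact \<theta> x i) * preact h x i)\<bar>
      \<le> norm h * (B + \<rho> * (B * (1 + real d * input_bound)))" for i
  proof (rule abs_neuron_term_le)
    have \<sigma>: "\<bar>\<sigma> (preact \<theta> x i)\<bar> \<le> B" "\<bar>\<sigma>' (preact \<theta> x i)\<bar> \<le> B"
      using A abs_preact_le_radius[OF x th] unfolding act_bounds_def by blast+
    then show "\<bar>\<sigma> (preact \<theta> x i)\<bar> \<le> B" by simp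
    show "\<bar>outer_weight h i\<bar> \<le> norm h"
      by (rule component_le_norm_cart)
    show "\<bar>outer_weight \<theta> i\<bar> \<le> \<rho>"
      using component_le_norm_cart th by (rule order_trans)
    show "\<bar>\<sigma>' (preact \<theta> x i) * preact h x i\<bar> \<le> B * (norm h * (1 + real d * input_bound))"
      unfolding abs_mult using \<sigma>(2) abs_preact_le[OF x, of h i] by (auto intro!: mult_mono)
  qed
  then have "\<bar>\<Sum>i=1..H. outer_weight h i * \<sigma> (preact \<theta> x i) + outer_weight \<theta> i * (\<sigma>' (preact \<theta> x i) * preact h x i)\<bar>
     \<le> (\<Sum>i=1..H. norm h * (B + \<rho> * (B * (1 + real d * input_bound))))"
    by (intro order_trans[OF sum_abs sum_mono])
  moreover have "\<bar>outer_bias h\<bar> \<le> norm h"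
    by (rule component_le_norm_cart)
  ultimately show ?thesis
    unfolding net_output_deriv_def output_lip_def by (simp add: algebra_simps)
qed

lemma abs_sq_error_grad_nth_le:
  assumes x: "x \<in> cube a b" and th: "norm \<theta> \<le> \<rho>" and A: "act_bounds \<sigma> \<sigma>' (preact_radius \<rho>) B"
  shows "\<bar>sq_error_grad \<sigma> \<sigma>' \<theta> x $ k\<bar> \<le> 2 * error_bound \<rho> B * output_lip \<rho> B"
proof -
  have "\<bar>sq_error_grad \<sigma> \<sigma>' \<theta> x $ k\<bar>
      = 2 * (\<bar>f x - net_output \<sigma> \<theta> x\<bar> * \<bar>net_output_deriv \<sigma> \<sigma>' \<theta> x (axis k 1)\<bar>)"
    unfolding sq_error_grad_def by (simp add: abs_mult abs_minus_commute) (simp add: abs_if)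
  also have "\<dots> \<le> 2 * (error_bound \<rho> B * output_lip \<rho> B)"
    using abs_error_le[OF assms] abs_net_output_deriv_le[OF assms, of "axis k 1"]
    by (intro mult_left_mono mult_mono) auto
  finally show ?thesis
    by simp
qed

lemma norm_sq_error_grad_le:
  assumes x: "x \<in> cube a b" and th: "norm \<theta> \<le> \<rho>" and A: "act_bounds \<sigma> \<sigma>' (preact_radius \<rho>) B"
  shows "norm (sq_error_grad \<sigma> \<sigma>' \<theta> x) \<le> real CARD('n) * (2 * error_bound \<rho> B * output_lip \<rho> B)"
proof -
  have "norm (sq_error_grad \<sigma> \<sigma>' \<theta> x) \<le> (\<Sum>k\<in>UNIV. \<bar>sq_error_grad \<sigma> \<sigma>' \<theta> x $ k\<bar>)"
    by (rule norm_le_l1_cart)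
  also have "\<dots> \<le> (\<Sum>k\<in>(UNIV::'n set). 2 * error_bound \<rho> B * output_lip \<rho> B)"
    by (rule sum_mono, rule abs_sq_error_grad_nth_le[OF assms])
  finally show ?thesis
    by simp
qed

lemma net_output_lipschitz:
  assumes x: "x \<in> cube a b" and th: "norm \<theta> \<le> \<rho>" and th': "norm \<theta>' \<le> \<rho>"
    and A: "act_bounds \<sigma> \<sigma>' (preact_radius \<rho>) B"
  shows "\<bar>net_output \<sigma> \<theta>' x - net_output \<sigma> \<theta> x\<bar> \<le> norm (\<theta>' - \<theta>) * output_lip \<rho> B"
proof -
  define h where "h = \<theta>' - \<theta>"
  have "\<bar>outer_weight \<theta>' i * \<sigma> (preact \<theta>' x i) - outer_weight \<theta> i * \<sigma> (preact \<theta> x i)\<bar>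
      \<le> norm h * (B + \<rho> * (B * (1 + real d * input_bound)))" for i
  proof -
    have "\<bar>outer_weight h i * \<sigma> (preact \<theta>' x i) + outer_weight \<theta> i * (\<sigma> (preact \<theta>' x i) - \<sigma> (preact \<theta> x i))\<bar>
      \<le> norm h * (B + \<rho> * (B * (1 + real d * input_bound)))"
    proof (rule abs_neuron_term_le)
      show "\<bar>\<sigma> (preact \<theta>' x i)\<bar> \<le> B"
        using A abs_preact_le_radius[OF x th'] unfolding act_bounds_def by blast
      show "\<bar>outer_weight h i\<bar> \<le> norm h"
        by (rule component_le_norm_cart)
      show "\<bar>outer_weight \<theta> i\<bar> \<le> \<rho>"
        using component_le_norm_cart th by (rule order_trans)
      have "\<rho> \<ge> 0"
        using th norm_ge_zero[of \<theta>] by linarith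
      then have "B \<ge> 0"
        using act_bounds_nonneg[OF A] preact_radius_nonneg by blast
      moreover have "\<bar>\<sigma> (preact \<theta>' x i) - \<sigma> (preact \<theta> x i)\<bar> \<le> B * \<bar>preact h x i\<bar>"
        using A abs_preact_le_radius[OF x th'] abs_preact_le_radius[OF x th]
        unfolding act_bounds_def h_def preact_diff by blast
      ultimately show "\<bar>\<sigma> (preact \<theta>' x i) - \<sigma> (preact \<theta> x i)\<bar> \<le> B * (norm h * (1 + real d * input_bound))"
        using abs_preact_le[OF x, of h i] by (auto intro: order_trans mult_left_mono)
    qed
    then show ?thesis
      unfolding h_def by (simp add: algebra_simps)
  qed
  then have "\<bar>(\<Sum>i=1..H. outer_weight \<theta>' i * \<sigma> (preact \<theta>' x i)) - (\<Sum>i=1..H. outer_weight \<theta> i * \<sigma> (preact \<theta> x i))\<bar>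
     \<le> (\<Sum>i=1..H. norm h * (B + \<rho> * (B * (1 + real d * input_bound))))"
    unfolding sum_subtractf[symmetric] by (intro order_trans[OF sum_abs sum_mono])
  moreover have "\<bar>outer_bias \<theta>' - outer_bias \<theta>\<bar> \<le> norm h"
    unfolding h_def using component_le_norm_cart[of "\<theta>' - \<theta>"] by simp
  ultimately show ?thesis
    unfolding net_output_def output_lip_def h_def[symmetric] by (simp add: algebra_simps)
qed

lemma sq_error_lipschitz:
  assumes x: "x \<in> cube a b" and th: "norm \<theta> \<le> \<rho>" and th': "norm \<theta>' \<le> \<rho>"
    and A: "act_bounds \<sigma> \<sigma>' (preact_radius \<rho>) B"
  shows "\<bar>sq_error \<sigma> \<theta>' x - sq_error \<sigma> \<theta> x\<bar> \<le> 2 * error_bound \<rho> B * output_lip \<rho> B * norm (\<theta>' - \<theta>)"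
proof -
  have "sq_error \<sigma> \<theta>' x - sq_error \<sigma> \<theta> x
      = (net_output \<sigma> \<theta> x - net_output \<sigma> \<theta>' x) * ((f x - net_output \<sigma> \<theta>' x) + (f x - net_output \<sigma> \<theta> x))"
    unfolding sq_error_def by (simp add: power2_eq_square algebra_simps)
  then have "\<bar>sq_error \<sigma> \<theta>' x - sq_error \<sigma> \<theta> x\<bar>
      = \<bar>net_output \<sigma> \<theta>' x - net_output \<sigma> \<theta> x\<bar> * \<bar>(f x - net_output \<sigma> \<theta>' x) + (f x - net_output \<sigma> \<theta> x)\<bar>"
    by (simp add: abs_mult abs_minus_commute)
  also have "\<dots> \<le> (norm (\<theta>' - \<theta>) * output_lip \<rho> B) * (2 * error_bound \<rho> B)"
    using net_output_lipschitz[OF assms] abs_error_le[OF x th A] abs_error_le[OF x th' A]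
    by (intro mult_mono) auto
  finally show ?thesis
    by (simp add: algebra_simps)
qed

lemma act_preact_measurable:
  "\<sigma> \<in> borel_measurable borel \<Longrightarrow> (\<lambda>x. \<sigma> (preact \<theta> x i)) \<in> borel_measurable \<mu>"
  by (rule measurable_compose[OF preact_measurable])

lemma net_output_measurable:
  "\<sigma> \<in> borel_measurable borel \<Longrightarrow> (\<lambda>x. net_output \<sigma> \<theta> x) \<in> borel_measurable \<mu>"
proof -
  assume s: "\<sigma> \<in> borel_measurable borel"
  note [measurable] = act_preact_measurable[OF s]
  show ?thesis unfolding net_output_def by measurable
qed

lemma sq_error_measurable: "\<sigma> \<in> borel_measurable borel \<Longrightarrow> (\<lambda>x. sq_error \<sigma> \<theta> x) \<in> borel_measurable \<mu>"
proof -
  assume s: "\<sigma> \<in> borel_measurable borel"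
  note [measurable] = net_output_measurable[OF s] f_measurable
  show ?thesis unfolding sq_error_def by measurable
qed

lemma net_output_deriv_measurable: "\<sigma> \<in> borel_measurable borel \<Longrightarrow> \<sigma>' \<in> borel_measurable borel \<Longrightarrow>
   (\<lambda>x. net_output_deriv \<sigma> \<sigma>' \<theta> x h) \<in> borel_measurable \<mu>"
proof -
  assume s: "\<sigma> \<in> borel_measurable borel" and s': "\<sigma>' \<in> borel_measurable borel"
  note [measurable] = act_preact_measurable[OF s] act_preact_measurable[OF s'] preact_measurable
  show ?thesis unfolding net_output_deriv_def by measurable
qed

lemma sq_error_grad_measurable: "\<sigma> \<in> borel_measurable borel \<Longrightarrow> \<sigma>' \<in> borel_measurable borel \<Longrightarrow>
   (\<lambda>x. sq_error_grad \<sigma> \<sigma>' \<theta> x) \<in> borel_measurable \<mu>"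
proof -
  assume s: "\<sigma> \<in> borel_measurable borel" and s': "\<sigma>' \<in> borel_measurable borel"
  note [measurable] = net_output_measurable[OF s] f_measurable net_output_deriv_measurable[OF s s']
  show ?thesis by (rule borel_measurable_vecI) (simp add: sq_error_grad_def)
qed

definition act_bounded :: "(real \<Rightarrow> real) \<Rightarrow> (real \<Rightarrow> real) \<Rightarrow> bool" where
  "act_bounded \<sigma> \<sigma>' \<longleftrightarrow> (\<forall>K\<ge>0. \<exists>B. act_bounds \<sigma> \<sigma>' K B)"

lemma act_boundedE:
  assumes "act_bounded \<sigma> \<sigma>'" "\<rho> \<ge> 0"
  obtains B where "act_bounds \<sigma> \<sigma>' (preact_radius \<rho>) B"
  using assms preact_radius_nonneg unfolding act_bounded_def by blast

lemma integrable_sq_error: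
  assumes "\<sigma> \<in> borel_measurable borel" "act_bounded \<sigma> \<sigma>'"
  shows "integrable \<mu> (\<lambda>x. sq_error \<sigma> \<theta> x)"
proof -
  obtain B where B: "act_bounds \<sigma> \<sigma>' (preact_radius (norm \<theta>)) B"
    using act_boundedE[OF assms(2) norm_ge_zero] .
  show ?thesis
    using mu_fin sq_error_measurable[OF assms(1)] abs_sq_error_le[OF _ order_refl B]
    by (intro finite_measure.integrable_const_bound[where B="(error_bound (norm \<theta>) B)\<^sup>2"])
       (auto simp: space_mu)
qed

lemma integrable_sq_error_grad:
  assumes "\<sigma> \<in> borel_measurable borel" "\<sigma>' \<in> borel_measurable borel" "act_bounded \<sigma> \<sigma>'"
  shows "integrable \<mu> (\<lambda>x. sq_error_grad \<sigma> \<sigma>' \<theta> x)"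
proof -
  obtain B where B: "act_bounds \<sigma> \<sigma>' (preact_radius (norm \<theta>)) B"
    using act_boundedE[OF assms(3) norm_ge_zero] .
  show ?thesis
    using mu_fin sq_error_grad_measurable[OF assms(1,2)] norm_sq_error_grad_le[OF _ order_refl B]
    by (intro finite_measure.integrable_const_bound
        [where B="real CARD('n) * (2 * error_bound (norm \<theta>) B * output_lip (norm \<theta>) B)"])
       (auto simp: space_mu)
qed

lemma has_derivative_risk:
  assumes meas: "\<sigma> \<in> borel_measurable borel" "\<sigma>' \<in> borel_measurable borel"
    and bounded: "act_bounded \<sigma> \<sigma>'"
    and der: "AE x in \<mu>. \<forall>i\<in>{1..H}. (\<sigma> has_real_derivative \<sigma>' (preact \<theta>0 x i)) (at (preact \<theta>0 x i))"
  shows "((\<lambda>\<theta>. \<integral>x. sq_error \<sigma> \<theta> x \<partial>\<mu>) has_derivative (\<lambda>h. (\<integral>x. sq_error_grad \<sigma> \<sigma>' \<theta>0 x \<partial>\<mu>) \<bullet> h))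
    (at \<theta>0)"
proof -
  define \<rho> where "\<rho> = norm \<theta>0 + 1"
  obtain B where B: "act_bounds \<sigma> \<sigma>' (preact_radius \<rho>) B"
    using act_boundedE[OF bounded, of \<rho>] unfolding \<rho>_def by fastforce
  define C where
    "C = max (2 * error_bound \<rho> B * output_lip \<rho> B)
       (real CARD('n) * (2 * error_bound \<rho> B * output_lip \<rho> B))"
  show ?thesis
  proof (rule has_derivative_integral_dominated[OF mu_fin, where C=C])
    show "(\<lambda>x. sq_error \<sigma> \<theta> x) \<in> borel_measurable \<mu>" for \<theta>
      by (rule sq_error_measurable[OF meas(1)])
    show "integrable \<mu> (\<lambda>x. sq_error \<sigma> \<theta> x)" for \<theta>
      by (rule integrable_sq_error[OF meas(1) bounded])
    show "(\<lambda>x. sq_error_grad \<sigma> \<sigma>' \<theta>0 x) \<in> borel_measurable \<mu>"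
      by (rule sq_error_grad_measurable[OF meas])
    show "AE x in \<mu>. ((\<lambda>\<theta>. sq_error \<sigma> \<theta> x) has_derivative (\<lambda>h. sq_error_grad \<sigma> \<sigma>' \<theta>0 x \<bullet> h)) (at \<theta>0)"
      using der by eventually_elim (rule has_derivative_sq_error, auto)
    show "\<bar>sq_error \<sigma> (\<theta>0 + h) x - sq_error \<sigma> \<theta>0 x\<bar> \<le> C * norm h"
      if x: "x \<in> space \<mu>" and h: "norm h \<le> 1" for x h
    proof -
      have "norm (\<theta>0 + h) \<le> \<rho>" "norm \<theta>0 \<le> \<rho>"
        using norm_triangle_ineq[of \<theta>0 h] h unfolding \<rho>_def by linarith+
      then have "\<bar>sq_error \<sigma> (\<theta>0 + h) x - sq_error \<sigma> \<theta>0 x\<bar> \<le> 2 * error_bound \<rho> B * output_lip \<rho> B * norm h"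
        using sq_error_lipschitz[OF _ _ _ B, of x \<theta>0 "\<theta>0 + h"] x by (simp add: space_mu)
      also have "\<dots> \<le> C * norm h"
        unfolding C_def by (intro mult_right_mono) auto
      finally show ?thesis .
    qed
    show "norm (sq_error_grad \<sigma> \<sigma>' \<theta>0 x) \<le> C" if "x \<in> space \<mu>" for x
      using norm_sq_error_grad_le[of x \<theta>0 \<rho> \<sigma> \<sigma>' B] that B unfolding C_def \<rho>_def
      by (simp add: space_mu le_max_iff_disj)
  qed
qed

lemma act_bounds_relu: "K \<ge> 0 \<Longrightarrow> act_bounds relu heaviside K (K + 1)"
proof -
  assume K: "K \<ge> 0"
  have l: "\<bar>max y 0 - max z 0\<bar> \<le> (K + 1) * \<bar>y - z\<bar>" for y z :: real
  proof -
    have "\<bar>max y 0 - max z 0\<bar> \<le> \<bar>y - z\<bar>" by (simp add: max_def abs_if)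
    also have "\<dots> \<le> (K + 1) * \<bar>y - z\<bar>" using K mult_right_mono[of 1 "K+1" "\<bar>y - z\<bar>"] by simp
    finally show ?thesis .
  qed
  show ?thesis unfolding act_bounds_def using K l by (auto simp: indicator_def)
qed

lemma isCont_act_preact: "continuous_on UNIV \<sigma> \<Longrightarrow> isCont (\<lambda>\<theta>. \<sigma> (preact \<theta> x i)) \<theta>0"
  by (rule isCont_o2[OF _ continuous_on_interior[of UNIV]])
     (use continuous_on_preact[of x i] in \<open>auto simp: continuous_on_eq_continuous_at\<close>)

lemma isCont_net_output: "continuous_on UNIV \<sigma> \<Longrightarrow> isCont (\<lambda>\<theta>. net_output \<sigma> \<theta> x) \<theta>0"
  unfolding net_output_def by (intro isCont_act_preact continuous_intros)

lemma isCont_net_output_deriv: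
  assumes "continuous_on UNIV \<sigma>"
    and "\<And>i. i \<in> {1..H} \<Longrightarrow> isCont (\<lambda>\<theta>. \<sigma>' (preact \<theta> x i) * preact h x i) \<theta>0"
  shows "isCont (\<lambda>\<theta>. net_output_deriv \<sigma> \<sigma>' \<theta> x h) \<theta>0"
  unfolding net_output_deriv_def by (intro assms(2) isCont_act_preact[OF assms(1)] continuous_intros) auto

lemma isCont_sq_error_grad_nth:
  assumes "continuous_on UNIV \<sigma>"
    and "\<And>i. i \<in> {1..H} \<Longrightarrow> isCont (\<lambda>\<theta>. \<sigma>' (preact \<theta> x i) * preact (axis k 1) x i) \<theta>0"
  shows "isCont (\<lambda>\<theta>. sq_error_grad \<sigma> \<sigma>' \<theta> x $ k) \<theta>0"
  unfolding sq_error_grad_def vec_lambda_beta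
  by (intro isCont_net_output_deriv isCont_net_output assms continuous_intros)

lemma isCont_sq_error: "continuous_on UNIV \<sigma> \<Longrightarrow> isCont (\<lambda>\<theta>. sq_error \<sigma> \<theta> x) \<theta>0"
  unfolding sq_error_def by (intro isCont_net_output continuous_intros)

lemma isCont_heaviside_preact:
  assumes "preact \<theta>0 x i \<noteq> 0 \<or> preact h x i = 0"
  shows "isCont (\<lambda>\<theta>. heaviside (preact \<theta> x i) * preact h x i) \<theta>0"
  using assms
proof
  assume "preact \<theta>0 x i \<noteq> 0"
  then have "isCont (\<lambda>\<theta>. heaviside (preact \<theta> x i)) \<theta>0"
    by (intro isCont_o2[OF _ isCont_heaviside])
       (use continuous_on_preact[of x i] in \<open>auto simp: continuous_on_eq_continuous_at\<close>)
  then show ?thesis by (intro continuous_intros)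
qed simp

lemma isCont_integral_sq_error:
  assumes "continuous_on UNIV \<sigma>" "act_bounded \<sigma> \<sigma>'"
  shows "isCont (\<lambda>\<theta>. \<integral>x. sq_error \<sigma> \<theta> x \<partial>\<mu>) \<theta>0"
proof -
  define \<rho> where "\<rho> = norm \<theta>0 + 1"
  obtain B where B: "act_bounds \<sigma> \<sigma>' (preact_radius \<rho>) B"
    using act_boundedE[OF assms(2), of \<rho>] unfolding \<rho>_def by fastforce
  show ?thesis
  proof (rule isCont_integral_dominated[OF mu_fin _ _ zero_less_one])
    show "(\<lambda>x. sq_error \<sigma> \<theta> x) \<in> borel_measurable \<mu>" for \<theta>
      using assms(1) by (intro sq_error_measurable borel_measurable_continuous_onI)
    show "AE x in \<mu>. isCont (\<lambda>\<theta>. sq_error \<sigma> \<theta> x) \<theta>0"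
      using assms(1) by (intro AE_I2 isCont_sq_error)
    show "\<bar>sq_error \<sigma> \<theta> x\<bar> \<le> (error_bound \<rho> B)\<^sup>2" if "dist \<theta> \<theta>0 < 1" "x \<in> space \<mu>" for \<theta> x
    proof -
      have "norm \<theta> \<le> \<rho>"
        using that norm_triangle_ineq2[of \<theta> \<theta>0] unfolding \<rho>_def dist_norm by linarith
      then show ?thesis
        using abs_sq_error_le[OF _ _ B] that by (simp add: space_mu)
    qed
  qed
qed

lemma isCont_integral_sq_error_grad_nth:
  assumes "\<sigma> \<in> borel_measurable borel" "\<sigma>' \<in> borel_measurable borel" "act_bounded \<sigma> \<sigma>'"
    and "AE x in \<mu>. isCont (\<lambda>\<theta>. sq_error_grad \<sigma> \<sigma>' \<theta> x $ k) \<theta>0"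
  shows "isCont (\<lambda>\<theta>. \<integral>x. sq_error_grad \<sigma> \<sigma>' \<theta> x $ k \<partial>\<mu>) \<theta>0"
proof -
  define \<rho> where "\<rho> = norm \<theta>0 + 1"
  obtain B where B: "act_bounds \<sigma> \<sigma>' (preact_radius \<rho>) B"
    using act_boundedE[OF assms(3), of \<rho>] unfolding \<rho>_def by fastforce
  show ?thesis
  proof (rule isCont_integral_dominated[OF mu_fin _ assms(4) zero_less_one])
    show "(\<lambda>x. sq_error_grad \<sigma> \<sigma>' \<theta> x $ k) \<in> borel_measurable \<mu>" for \<theta>
      using sq_error_grad_measurable[OF assms(1,2)] by (rule borel_measurable_vec_nth)
    show "\<bar>sq_error_grad \<sigma> \<sigma>' \<theta> x $ k\<bar> \<le> 2 * error_bound \<rho> B * output_lip \<rho> B"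
      if "dist \<theta> \<theta>0 < 1" "x \<in> space \<mu>" for \<theta> x
    proof -
      have "norm \<theta> \<le> \<rho>"
        using that norm_triangle_ineq2[of \<theta> \<theta>0] unfolding \<rho>_def dist_norm by linarith
      then show ?thesis
        using abs_sq_error_grad_nth_le[OF _ _ B] that by (simp add: space_mu)
    qed
  qed
qed

definition nondegenerate :: "real^'n \<Rightarrow> nat \<Rightarrow> bool" where
  "nondegenerate \<theta> i \<longleftrightarrow> inner_bias \<theta> i \<noteq> 0 \<or> (\<exists>j\<in>{1..d}. inner_weight \<theta> i j \<noteq> 0)"

lemma preact_weights_inner:
  "\<exists>u. (\<forall>x. (\<Sum>j=1..d. inner_weight \<theta> i j * x$c j) = u \<bullet> x)
     \<and> (\<forall>j\<in>{1..d}. u $ c j = inner_weight \<theta> i j)"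
proof -
  define u where "u = (\<chi> k. \<theta>$e((i-1)*d + inv_into {1..d} c k))"
  have inj: "inj_on c {1..d}" using c_bij by (rule bij_betw_imp_inj_on)
  have uc: "u $ c j = inner_weight \<theta> i j" if "j \<in> {1..d}" for j
    unfolding u_def using inv_into_f_f[OF inj that] by simp
  have "u \<bullet> x = (\<Sum>j=1..d. inner_weight \<theta> i j * x$c j)" for x
  proof -
    have "u \<bullet> x = (\<Sum>k\<in>UNIV. u $ k * x $ k)" by (simp add: inner_vec_def)
    also have "\<dots> = (\<Sum>j=1..d. u $ c j * x $ c j)"
      by (rule sum.reindex_bij_betw[OF c_bij, symmetric])
    also have "\<dots> = (\<Sum>j=1..d. inner_weight \<theta> i j * x$c j)"
      by (rule sum.cong) (auto simp: uc)
    finally show ?thesis .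
  qed
  then show ?thesis using uc by metis
qed

lemma AE_preact_nonzero:
  assumes "nondegenerate \<theta> i"
  shows "AE x in \<mu>. preact \<theta> x i \<noteq> 0"
proof -
  obtain u where u: "\<And>x. (\<Sum>j=1..d. inner_weight \<theta> i j * x$c j) = u \<bullet> x"
     "\<And>j. j \<in> {1..d} \<Longrightarrow> u $ c j = inner_weight \<theta> i j"
    using preact_weights_inner[of \<theta> i] by blast
  have innu: "preact \<theta> x i = inner_bias \<theta> i + u \<bullet> x" for x unfolding preact_def u(1) ..
  define N where "N = {x. u \<bullet> x = - inner_bias \<theta> i} \<inter> cube a b"
  have "u \<noteq> 0 \<or> - inner_bias \<theta> i \<noteq> 0"
    using assms u(2) unfolding nondegenerate_def by auto
  then have "negligible {x. u \<bullet> x = - inner_bias \<theta> i}" by (rule negligible_hyperplane)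
  then have "negligible N" unfolding N_def by (rule negligible_subset) auto
  then have "N \<in> null_sets lebesgue" by (simp add: negligible_iff_null_sets)
  moreover have Ns: "N \<in> sets lborel"
    unfolding N_def cube_def by (intro sets.Int borel_closed closed_hyperplane closed_cbox) auto
  ultimately have "N \<in> null_sets lborel" by (simp add: null_sets_completion_iff)
  moreover have "cube a b \<in> sets lborel" unfolding cube_def by simp
  ultimately have "N \<in> null_sets (restrict_space lborel (cube a b))"
    by (subst null_sets_restrict_space) (auto simp: N_def)
  then have "N \<in> null_sets \<mu>" using mu_ac unfolding absolutely_continuous_def by blast
  then show ?thesis
    by (rule AE_I') (auto simp: space_mu N_def innu)
qed

definition neuron_params :: "nat \<Rightarrow> nat set" where
  "neuron_params i = (\<lambda>j. (i-1)*d+j) ` {1..d} \<union> {H*d+i}"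

lemma e_inj: "inj_on e {1..d*H + 2*H + 1}"
  using e_bij by (rule bij_betw_imp_inj_on)

lemma first_layer_index_le:
  assumes "i \<in> {1..H}" "j \<le> d"
  shows "(i-1)*d + j \<le> H*d"
proof -
  have "(i-1)*d + j \<le> (i-1)*d + d"
    using assms(2) by simp
  also have "\<dots> = i * d"
    using assms(1) by (cases i) auto
  also have "\<dots> \<le> H * d"
    using assms(1) by simp
  finally show ?thesis .
qed

lemma neuron_params_bounds:
  assumes i: "i \<in> {1..H}" and m: "m \<in> neuron_params i"
  shows "m \<in> {1..H*d + H}"
proof -
  consider (weight) j where "j \<in> {1..d}" "m = (i-1)*d + j" | (bias) "m = H*d + i"
    using m unfolding neuron_params_def by blast
  then show ?thesis
  proof cases
    case weight
    then have "m \<le> H*d"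
      using first_layer_index_le[OF i, of j] by simp
    then show ?thesis
      using weight by simp
  next
    case bias
    then show ?thesis
      using i by auto
  qed
qed

lemma neuron_params_disjoint:
  assumes i: "i \<in> {1..H}" and i': "i' \<in> {1..H}" and "i \<noteq> i'"
  shows "neuron_params i \<inter> neuron_params i' = {}"
proof -
  have distinct_weights: "(i-1)*d + j \<noteq> (i'-1)*d + j'" if "j \<in> {1..d}" "j' \<in> {1..d}" for j j'
  proof
    assume eq: "(i-1)*d + j = (i'-1)*d + j'"
    have "i - 1 = i' - 1"
      by (rule mult_add_less_inj[of "j - 1" d "j' - 1"]) (use that eq in auto)
    then show False
      using i i' \<open>i \<noteq> i'\<close> by auto
  qed
  have less: "(k-1)*d + j < H*d + l" if "k \<in> {1..H}" "j \<le> d" "l \<ge> 1" for k j l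
    using first_layer_index_le[OF that(1,2)] that(3) by linarith
  have "m \<notin> neuron_params i'" if m: "m \<in> neuron_params i" for m
  proof
    assume m': "m \<in> neuron_params i'"
    consider (weights) j j' where "j \<in> {1..d}" "j' \<in> {1..d}" "m = (i-1)*d + j" "m = (i'-1)*d + j'"
      | (weight_bias) j where "j \<in> {1..d}" "m = (i-1)*d + j" "m = H*d + i'"
      | (bias_weight) j' where "j' \<in> {1..d}" "m = H*d + i" "m = (i'-1)*d + j'"
      | (biases) "m = H*d + i" "m = H*d + i'"
      using m m' unfolding neuron_params_def by blast
    then show False
    proof cases
      case weights
      then show False
        using distinct_weights[OF weights(1,2)] weights(3,4) by simp
    next
      case weight_bias
      then show False
        using less[OF i, of j i'] i' by simp
    next
      case bias_weight
      then show False
        using less[OF i', of j' i] i by simp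
    next
      case biases
      then show False
        using \<open>i \<noteq> i'\<close> by simp
    qed
  qed
  then show ?thesis
    by blast
qed
lemma axis_e_nth_zero:
  assumes "m \<in> {1..d*H + 2*H + 1}" "m' \<in> {1..d*H + 2*H + 1}" "m \<noteq> m'"
  shows "axis (e m) (1::real) $ e m' = 0"
proof -
  have "e m \<noteq> e m'" using e_inj assms unfolding inj_on_def by blast
  then show ?thesis by (simp add: axis_def)
qed

lemma preact_axis_zero: "k \<notin> e ` neuron_params i \<Longrightarrow> preact (axis k 1) x i = 0"
  unfolding preact_def neuron_params_def by (auto simp: axis_def intro!: sum.neutral)

lemma preact_degenerate: "\<not> nondegenerate \<theta> i \<Longrightarrow> preact \<theta> x i = 0"
  unfolding nondegenerate_def preact_def by auto

lemma net_output_deriv_degenerate: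
  assumes i: "i \<in> {1..H}" and m: "m \<in> neuron_params i" and deg: "\<not> nondegenerate \<theta> i"
  shows "net_output_deriv relu heaviside \<theta> x (axis (e m) 1) = 0"
proof -
  have m_bounds: "m \<in> {1..d*H + 2*H + 1}" "m \<le> H*d + H"
    using neuron_params_bounds[OF i m] by (auto simp: mult.commute)
  have outer_bias: "outer_bias (axis (e m) 1) = 0"
    using m_bounds by (intro axis_e_nth_zero) auto
  have outer_weight: "outer_weight (axis (e m) 1) i' = 0" if "i' \<in> {1..H}" for i'
    using m_bounds that by (intro axis_e_nth_zero) (auto simp: algebra_simps)
  have hidden: "outer_weight \<theta> i' * (heaviside (preact \<theta> x i') * preact (axis (e m) 1) x i') = 0"
    if "i' \<in> {1..H}" for i'
  proof (cases "i' = i")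
    case True
    then show ?thesis
      using preact_degenerate[OF deg] by simp
  next
    case False
    have "e m \<notin> e ` neuron_params i'"
    proof
      assume "e m \<in> e ` neuron_params i'"
      then obtain m' where m': "m' \<in> neuron_params i'" "e m = e m'"
        by auto
      have "m' \<in> {1..d*H + 2*H + 1}"
        using neuron_params_bounds[OF that m'(1)] by (auto simp: mult.commute)
      then have "m = m'"
        using e_inj m_bounds(1) m'(2) unfolding inj_on_def by blast
      then show False
        using neuron_params_disjoint[OF i that] False m m'(1) by auto
    qed
    then show ?thesis
      using preact_axis_zero by simp
  qed
  show ?thesis
    unfolding net_output_deriv_def using outer_bias outer_weight hidden by (simp add: sum.neutral)
qed

lemma open_nondegenerate: "open {\<theta>::real^'n. \<forall>i\<in>{1..H}. nondegenerate \<theta> i}"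
proof -
  have o: "open {\<theta>::real^'n. \<theta>$k \<noteq> 0}" for k
    by (rule open_Collect_neq) (intro continuous_intros)+
  have "{\<theta>::real^'n. \<forall>i\<in>{1..H}. nondegenerate \<theta> i} =
      (\<Inter>i\<in>{1..H}. {\<theta>. inner_bias \<theta> i \<noteq> 0} \<union> (\<Union>j\<in>{1..d}. {\<theta>. inner_weight \<theta> i j \<noteq> 0}))"
    unfolding nondegenerate_def by auto
  also have "open \<dots>" using o by (intro open_INT open_Un open_UN) auto
  finally show ?thesis .
qed

lemma null_sets_degenerate: "- {\<theta>::real^'n. \<forall>i\<in>{1..H}. nondegenerate \<theta> i} \<in> null_sets lborel"
proof -
  let ?U = "{\<theta>::real^'n. \<forall>i\<in>{1..H}. nondegenerate \<theta> i}"
  have sub: "- ?U \<subseteq> \<Union>((\<lambda>i. {\<theta>. axis (e(H*d+i)) 1 \<bullet> \<theta> = 0}) ` {1..H})"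
    unfolding nondegenerate_def by (auto simp: inner_axis')
  have "negligible (\<Union>((\<lambda>i. {\<theta>::real^'n. axis (e(H*d+i)) 1 \<bullet> \<theta> = 0}) ` {1..H}))"
    by (intro negligible_Union) (auto intro!: negligible_hyperplane simp: axis_eq_0_iff)
  then have "negligible (- ?U)" using sub by (rule negligible_subset)
  then have "- ?U \<in> null_sets lebesgue" by (simp add: negligible_iff_null_sets)
  moreover have "- ?U \<in> sets lborel"
  proof -
    have c: "closed (- ?U)" using open_nondegenerate by (simp add: closed_def)
    show ?thesis using borel_closed[OF c] by simp
  qed
  ultimately show ?thesis by (simp add: null_sets_completion_iff)
qed

end

section \<open>Smooth approximations of the ReLU activation\<close>

locale relu_approx = shallow_net d H e c a b f \<mu>
  for d H :: nat and e :: "nat \<Rightarrow> 'n::finite" and c :: "nat \<Rightarrow> 'd::finite"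
    and a b :: real and f :: "real^'d \<Rightarrow> real" and \<mu> :: "(real^'d) measure" +
  fixes R :: "nat \<Rightarrow> real \<Rightarrow> real"
  assumes R_C1: "\<forall>r\<ge>1. R r C1_differentiable_on UNIV"
    and R_bdd: "\<forall>x. bdd_above {\<bar>R r y\<bar> + \<bar>deriv (R r) y\<bar> | r y. r \<ge> 1 \<and> y \<in> {-\<bar>x\<bar>..\<bar>x\<bar>}}"
    and R_lim: "\<forall>x. limsup (\<lambda>r. ereal (\<bar>R r x - max x 0\<bar> + \<bar>deriv (R r) x - indicator {0<..} x\<bar>)) = 0"
begin

lemma R_has_derivative: assumes "r \<ge> 1" shows "(R r has_real_derivative deriv (R r) y) (at y)"
  and "continuous_on UNIV (deriv (R r))"
proof -
  obtain D where D: "\<And>x. (R r has_vector_derivative D x) (at x)" "continuous_on UNIV D"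
    using R_C1 assms unfolding C1_differentiable_on_def by blast
  have Dr: "(R r has_real_derivative D x) (at x)" for x
    using D(1) by (simp add: has_real_derivative_iff_has_vector_derivative)
  then have "deriv (R r) = D" by (intro ext DERIV_imp_deriv)
  then show "(R r has_real_derivative deriv (R r) y) (at y)" "continuous_on UNIV (deriv (R r))"
    using Dr D(2) by auto
qed

lemma continuous_on_R: "r \<ge> 1 \<Longrightarrow> continuous_on UNIV (R r)"
  using R_has_derivative(1) by (intro continuous_at_imp_continuous_on) (auto intro: DERIV_isCont)

lemma R_measurable: "r \<ge> 1 \<Longrightarrow> R r \<in> borel_measurable borel"
  using continuous_on_R borel_measurable_continuous_onI by blast

lemma deriv_R_measurable: "r \<ge> 1 \<Longrightarrow> deriv (R r) \<in> borel_measurable borel"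
  using R_has_derivative(2) borel_measurable_continuous_onI by blast

lemma act_bounds_R: assumes "K \<ge> 0" shows "\<exists>B. \<forall>r\<ge>1. act_bounds (R r) (deriv (R r)) K B"
proof -
  obtain B where B: "\<And>s. s \<in> {\<bar>R r y\<bar> + \<bar>deriv (R r) y\<bar> | r y. r \<ge> 1 \<and> y \<in> {-\<bar>K\<bar>..\<bar>K\<bar>}} \<Longrightarrow> s \<le> B"
    using R_bdd unfolding bdd_above_def by blast
  have b: "\<bar>R r y\<bar> + \<bar>deriv (R r) y\<bar> \<le> B" if "r \<ge> 1" "\<bar>y\<bar> \<le> K" for r y
  proof (rule B)
    show "\<bar>R r y\<bar> + \<bar>deriv (R r) y\<bar> \<in> {\<bar>R r y\<bar> + \<bar>deriv (R r) y\<bar> | r y. r \<ge> 1 \<and> y \<in> {-\<bar>K\<bar>..\<bar>K\<bar>}}"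
      unfolding mem_Collect_eq by (rule exI[of _ r], rule exI[of _ y]) (use that assms in auto)
  qed
  have lip: "\<bar>R r y - R r z\<bar> \<le> B * \<bar>y - z\<bar>"
    if r: "r \<ge> 1" and y: "\<bar>y\<bar> \<le> K" and z: "\<bar>z\<bar> \<le> K" and yz: "y < z" for r y z
  proof -
    obtain w where w: "y < w" "w < z" "R r z - R r y = (z - y) * deriv (R r) w"
      using MVT2[OF yz, of "R r" "deriv (R r)"] R_has_derivative(1)[OF r] by blast
    have wK: "\<bar>w\<bar> \<le> K" using w(1,2) y z by (auto simp: abs_le_iff)
    have "\<bar>deriv (R r) w\<bar> \<le> B" using b[OF r wK] abs_ge_zero[of "R r w"] by linarith
    then have "\<bar>R r z - R r y\<bar> \<le> \<bar>z - y\<bar> * B" unfolding w(3) abs_mult by (intro mult_left_mono) auto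
    then show ?thesis by (simp add: abs_minus_commute mult.commute)
  qed
  have "act_bounds (R r) (deriv (R r)) K B" if r: "r \<ge> 1" for r
    unfolding act_bounds_def
  proof (intro conjI allI impI)
    fix y assume "\<bar>y\<bar> \<le> K"
    then show "\<bar>R r y\<bar> \<le> B" "\<bar>deriv (R r) y\<bar> \<le> B"
      using b[OF r] abs_ge_zero[of "R r y"] abs_ge_zero[of "deriv (R r) y"] by (fastforce, fastforce)
  next
    fix y z assume y: "\<bar>y\<bar> \<le> K" and z: "\<bar>z\<bar> \<le> K"
    consider "y < z" | "y = z" | "z < y" by linarith
    then show "\<bar>R r y - R r z\<bar> \<le> B * \<bar>y - z\<bar>"
    proof cases
      case 1 then show ?thesis using lip[OF r y z] by simp
    next
      case 2 then show ?thesis by simp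
    next
      case 3 then show ?thesis using lip[OF r z y] by (simp add: abs_minus_commute)
    qed
  qed
  then show ?thesis by blast
qed

lemma R_tendsto: "(\<lambda>r. R r y) \<longlonglongrightarrow> max y 0" "(\<lambda>r. deriv (R r) y) \<longlonglongrightarrow> indicator {0<..} y"
proof -
  define s where "s r = \<bar>R r y - max y 0\<bar> + \<bar>deriv (R r) y - indicator {0<..} y\<bar>" for r
  have ls: "limsup (\<lambda>r. ereal (s r)) = 0" using R_lim unfolding s_def by blast
  have li: "liminf (\<lambda>r. ereal (s r)) \<ge> 0"
    by (rule Liminf_bounded) (auto simp: s_def)
  have "liminf (\<lambda>r. ereal (s r)) \<le> limsup (\<lambda>r. ereal (s r))" by (rule Liminf_le_Limsup) simp
  then have "liminf (\<lambda>r. ereal (s r)) = 0" using li ls by simp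
  then have "(\<lambda>r. ereal (s r)) \<longlonglongrightarrow> ereal 0" using ls
    by (subst tendsto_iff_Liminf_eq_Limsup) (auto simp: zero_ereal_def)
  then have s0: "s \<longlonglongrightarrow> 0" by (simp only: lim_ereal)
  have "(\<lambda>r. \<bar>R r y - max y 0\<bar>) \<longlonglongrightarrow> 0"
    by (rule tendsto_sandwich[OF _ _ tendsto_const s0]) (auto simp: s_def)
  then show "(\<lambda>r. R r y) \<longlonglongrightarrow> max y 0"
    by (simp add: LIM_zero_iff tendsto_rabs_zero_iff)
  have "(\<lambda>r. \<bar>deriv (R r) y - indicator {0<..} y\<bar>) \<longlonglongrightarrow> 0"
    by (rule tendsto_sandwich[OF _ _ tendsto_const s0]) (auto simp: s_def)
  then show "(\<lambda>r. deriv (R r) y) \<longlonglongrightarrow> indicator {0<..} y"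
    by (simp add: LIM_zero_iff tendsto_rabs_zero_iff)
qed

definition loss :: "nat \<Rightarrow> real^'n \<Rightarrow> real" where
  "loss r \<theta> = (\<integral>x. sq_error (R r) \<theta> x \<partial>\<mu>)"

definition loss_grad :: "nat \<Rightarrow> real^'n \<Rightarrow> real^'n" where
  "loss_grad r \<theta> = (\<integral>x. sq_error_grad (R r) (deriv (R r)) \<theta> x \<partial>\<mu>)"

definition relu_loss :: "real^'n \<Rightarrow> real" where
  "relu_loss \<theta> = (\<integral>x. sq_error relu \<theta> x \<partial>\<mu>)"

definition relu_grad :: "real^'n \<Rightarrow> real^'n" where
  "relu_grad \<theta> = (\<integral>x. sq_error_grad relu heaviside \<theta> x \<partial>\<mu>)"

lemma relu_measurable: "relu \<in> borel_measurable borel"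
  by measurable

lemma heaviside_measurable: "heaviside \<in> borel_measurable borel"
  by measurable

lemma act_bounded_R: "r \<ge> 1 \<Longrightarrow> act_bounded (R r) (deriv (R r))"
  using act_bounds_R unfolding act_bounded_def by blast

lemma act_bounded_relu: "act_bounded relu heaviside"
  using act_bounds_relu unfolding act_bounded_def by blast

lemma has_derivative_loss:
  assumes r: "r \<ge> 1"
  shows "(loss r has_derivative (\<lambda>h. loss_grad r \<theta> \<bullet> h)) (at \<theta>)"
  unfolding loss_def[abs_def] loss_grad_def
  by (rule has_derivative_risk[OF R_measurable[OF r] deriv_R_measurable[OF r] act_bounded_R[OF r]])
     (auto intro: R_has_derivative r)

lemma loss_grad_nth:
  "r \<ge> 1 \<Longrightarrow> loss_grad r \<theta> $ k = (\<integral>x. sq_error_grad (R r) (deriv (R r)) \<theta> x $ k \<partial>\<mu>)"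
  unfolding loss_grad_def
  by (intro integral_vec_nth integrable_sq_error_grad R_measurable deriv_R_measurable act_bounded_R)

lemma relu_grad_nth: "relu_grad \<theta> $ k = (\<integral>x. sq_error_grad relu heaviside \<theta> x $ k \<partial>\<mu>)"
  unfolding relu_grad_def
  by (intro integral_vec_nth integrable_sq_error_grad relu_measurable heaviside_measurable act_bounded_relu)

lemma loss_grad_bounded:
  assumes "\<rho> \<ge> 0"
  shows "\<exists>C. \<forall>r\<ge>1. \<forall>\<theta>. norm \<theta> \<le> \<rho> \<longrightarrow> norm (loss_grad r \<theta>) \<le> C"
proof -
  obtain B where B: "\<And>r. r \<ge> 1 \<Longrightarrow> act_bounds (R r) (deriv (R r)) (preact_radius \<rho>) B"
    using act_bounds_R[OF preact_radius_nonneg[OF assms]] by blast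
  have "norm (loss_grad r \<theta>)
      \<le> real CARD('n) * (2 * error_bound \<rho> B * output_lip \<rho> B) * measure \<mu> (space \<mu>)"
    if "r \<ge> 1" "norm \<theta> \<le> \<rho>" for r \<theta>
    unfolding loss_grad_def
    by (rule norm_integral_le_const[OF mu_fin integrable_sq_error_grad[OF R_measurable deriv_R_measurable
          act_bounded_R]])
       (use norm_sq_error_grad_le[OF _ that(2) B[OF that(1)]] that(1) in \<open>simp_all add: space_mu\<close>)
  then show ?thesis
    by blast
qed

lemma relu_grad_bounded:
  assumes "\<rho> \<ge> 0"
  shows "\<exists>C. \<forall>\<theta>. norm \<theta> \<le> \<rho> \<longrightarrow> norm (relu_grad \<theta>) \<le> C"
proof -
  obtain B where B: "act_bounds relu heaviside (preact_radius \<rho>) B"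
    using act_boundedE[OF act_bounded_relu assms] .
  have "norm (relu_grad \<theta>)
      \<le> real CARD('n) * (2 * error_bound \<rho> B * output_lip \<rho> B) * measure \<mu> (space \<mu>)"
    if "norm \<theta> \<le> \<rho>" for \<theta>
    unfolding relu_grad_def
    by (rule norm_integral_le_const[OF mu_fin integrable_sq_error_grad[OF relu_measurable
          heaviside_measurable act_bounded_relu]])
       (use norm_sq_error_grad_le[OF _ that B] in \<open>simp add: space_mu\<close>)
  then show ?thesis
    by blast
qed

lemma loss_tendsto: "(\<lambda>r. loss r \<theta>) \<longlonglongrightarrow> relu_loss \<theta>"
proof -
  obtain B where B: "\<And>r. r \<ge> 1 \<Longrightarrow> act_bounds (R r) (deriv (R r)) (preact_radius (norm \<theta>)) B"
    using act_bounds_R[OF preact_radius_nonneg[OF norm_ge_zero]] by blast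
  have "(\<lambda>r. \<integral>x. sq_error (R (Suc r)) \<theta> x \<partial>\<mu>) \<longlonglongrightarrow> (\<integral>x. sq_error relu \<theta> x \<partial>\<mu>)"
  proof (rule integral_dominated_convergence[where w="\<lambda>_. (error_bound (norm \<theta>) B)\<^sup>2"])
    show "(\<lambda>x. sq_error relu \<theta> x) \<in> borel_measurable \<mu>"
      by (rule sq_error_measurable[OF relu_measurable])
    show "(\<lambda>x. sq_error (R (Suc r)) \<theta> x) \<in> borel_measurable \<mu>" for r
      by (rule sq_error_measurable[OF R_measurable]) simp
    show "integrable \<mu> (\<lambda>_. (error_bound (norm \<theta>) B)\<^sup>2)"
      using mu_fin finite_measure.integrable_const by blast
    have "(\<lambda>r. R (Suc r) y) \<longlonglongrightarrow> relu y" for y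
      using R_tendsto(1)[of y] by (rule LIMSEQ_Suc)
    then show "AE x in \<mu>. (\<lambda>r. sq_error (R (Suc r)) \<theta> x) \<longlonglongrightarrow> sq_error relu \<theta> x"
      unfolding sq_error_def net_output_def by (intro AE_I2 tendsto_intros)
    show "AE x in \<mu>. norm (sq_error (R (Suc r)) \<theta> x) \<le> (error_bound (norm \<theta>) B)\<^sup>2" for r
      using abs_sq_error_le[OF _ order_refl B[of "Suc r"]] by (auto simp: space_mu)
  qed
  then have "(\<lambda>r. loss (Suc r) \<theta>) \<longlonglongrightarrow> relu_loss \<theta>"
    unfolding loss_def relu_loss_def .
  then show ?thesis
    by (rule LIMSEQ_imp_Suc)
qed

lemma loss_grad_tendsto: "(\<lambda>r. loss_grad r \<theta>) \<longlonglongrightarrow> relu_grad \<theta>"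
proof -
  obtain B where B: "\<And>r. r \<ge> 1 \<Longrightarrow> act_bounds (R r) (deriv (R r)) (preact_radius (norm \<theta>)) B"
    using act_bounds_R[OF preact_radius_nonneg[OF norm_ge_zero]] by blast
  define C where "C = 2 * error_bound (norm \<theta>) B * output_lip (norm \<theta>) B"
  have "(\<lambda>r. loss_grad (Suc r) \<theta>) \<longlonglongrightarrow> relu_grad \<theta>"
  proof (rule vec_tendstoI)
    fix k
    have "(\<lambda>r. \<integral>x. sq_error_grad (R (Suc r)) (deriv (R (Suc r))) \<theta> x $ k \<partial>\<mu>)
        \<longlonglongrightarrow> (\<integral>x. sq_error_grad relu heaviside \<theta> x $ k \<partial>\<mu>)"
    proof (rule integral_dominated_convergence[where w="\<lambda>_. C"])
      show "(\<lambda>x. sq_error_grad relu heaviside \<theta> x $ k) \<in> borel_measurable \<mu>"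
        using sq_error_grad_measurable[OF relu_measurable heaviside_measurable]
        by (rule borel_measurable_vec_nth)
      show "(\<lambda>x. sq_error_grad (R (Suc r)) (deriv (R (Suc r))) \<theta> x $ k) \<in> borel_measurable \<mu>" for r
        using sq_error_grad_measurable[OF R_measurable deriv_R_measurable, of "Suc r"]
        by (intro borel_measurable_vec_nth) simp
      show "integrable \<mu> (\<lambda>_. C)"
        using mu_fin finite_measure.integrable_const by blast
      have "(\<lambda>r. R (Suc r) y) \<longlonglongrightarrow> relu y" "(\<lambda>r. deriv (R (Suc r)) y) \<longlonglongrightarrow> heaviside y" for y
        using R_tendsto[of y] by (auto intro: LIMSEQ_Suc)
      then show "AE x in \<mu>. (\<lambda>r. sq_error_grad (R (Suc r)) (deriv (R (Suc r))) \<theta> x $ k)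
          \<longlonglongrightarrow> sq_error_grad relu heaviside \<theta> x $ k"
        unfolding sq_error_grad_def net_output_deriv_def net_output_def vec_lambda_beta
        by (intro AE_I2 tendsto_intros)
      show "AE x in \<mu>. norm (sq_error_grad (R (Suc r)) (deriv (R (Suc r))) \<theta> x $ k) \<le> C" for r
        using abs_sq_error_grad_nth_le[OF _ order_refl B[of "Suc r"]] by (auto simp: space_mu C_def)
    qed
    then show "(\<lambda>r. loss_grad (Suc r) \<theta> $ k) \<longlonglongrightarrow> relu_grad \<theta> $ k"
      by (simp add: loss_grad_nth relu_grad_nth)
  qed
  then show ?thesis
    by (rule LIMSEQ_imp_Suc)
qed

lemma continuous_on_loss_grad:
  assumes r: "r \<ge> 1"
  shows "continuous_on UNIV (loss_grad r)"
proof (intro continuous_at_imp_continuous_on ballI isCont_vecI)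
  fix \<theta>0 :: "real^'n" and k
  have "AE x in \<mu>. isCont (\<lambda>\<theta>. sq_error_grad (R r) (deriv (R r)) \<theta> x $ k) \<theta>0"
    by (intro AE_I2 isCont_sq_error_grad_nth continuous_on_R[OF r] continuous_intros isCont_act_preact
        R_has_derivative(2)[OF r])
  then have "isCont (\<lambda>\<theta>. \<integral>x. sq_error_grad (R r) (deriv (R r)) \<theta> x $ k \<partial>\<mu>) \<theta>0"
    by (rule isCont_integral_sq_error_grad_nth[OF R_measurable[OF r] deriv_R_measurable[OF r]
          act_bounded_R[OF r]])
  then show "isCont (\<lambda>\<theta>. loss_grad r \<theta> $ k) \<theta>0"
    by (simp add: loss_grad_nth[OF r])
qed

lemma continuous_on_relu_loss: "continuous_on UNIV relu_loss"
  unfolding relu_loss_def[abs_def]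
  by (intro continuous_at_imp_continuous_on ballI isCont_integral_sq_error[OF _ act_bounded_relu])
     (intro continuous_intros)

lemma isCont_relu_grad_nth:
  assumes "AE x in \<mu>. \<forall>i\<in>{1..H}. preact \<theta>0 x i \<noteq> 0 \<or> preact (axis k 1) x i = 0"
  shows "isCont (\<lambda>\<theta>. relu_grad \<theta> $ k) \<theta>0"
proof -
  have "AE x in \<mu>. isCont (\<lambda>\<theta>. sq_error_grad relu heaviside \<theta> x $ k) \<theta>0"
    using assms by eventually_elim (intro isCont_sq_error_grad_nth isCont_heaviside_preact continuous_intros, auto)
  then show ?thesis
    unfolding relu_grad_nth
    by (intro isCont_integral_sq_error_grad_nth relu_measurable heaviside_measurable act_bounded_relu)
qed

lemma relu_grad_degenerate:
  assumes i: "i \<in> {1..H}" and m: "m \<in> neuron_params i" and deg: "\<not> nondegenerate \<theta> i"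
  shows "relu_grad \<theta> $ e m = 0"
  unfolding relu_grad_nth sq_error_grad_def using net_output_deriv_degenerate[OF assms] by simp

lemma isCont_relu_grad_nth_nondegenerate:
  assumes "\<forall>i\<in>{1..H}. \<not> nondegenerate \<theta>0 i \<longrightarrow> k \<notin> e ` neuron_params i"
  shows "isCont (\<lambda>\<theta>. relu_grad \<theta> $ k) \<theta>0"
proof (rule isCont_relu_grad_nth)
  have "\<forall>i\<in>{1..H}. AE x in \<mu>. preact \<theta>0 x i \<noteq> 0 \<or> preact (axis k 1) x i = 0"
  proof
    fix i assume i: "i \<in> {1..H}"
    show "AE x in \<mu>. preact \<theta>0 x i \<noteq> 0 \<or> preact (axis k 1) x i = 0"
    proof (cases "nondegenerate \<theta>0 i")
      case True
      then have "AE x in \<mu>. preact \<theta>0 x i \<noteq> 0" by (rule AE_preact_nonzero)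
      then show ?thesis by eventually_elim simp
    next
      case False
      then show ?thesis
        using assms i preact_axis_zero by (intro AE_I2) auto
    qed
  qed
  then show "AE x in \<mu>. \<forall>i\<in>{1..H}. preact \<theta>0 x i \<noteq> 0 \<or> preact (axis k 1) x i = 0"
    by (subst AE_ball_countable) auto
qed

text \<open>The norm of the coordinates that do not belong to inner parameters of neurons degenerate
  at \<open>\<theta>\<^sub>0\<close> is a minorant of the norm, continuous at \<open>\<theta>\<^sub>0\<close>, that agrees with it there.\<close>

lemma relu_grad_norm_lsc:
  assumes "\<epsilon> > 0"
  shows "\<forall>\<^sub>F \<theta> in nhds \<theta>0. norm (relu_grad \<theta>0) - \<epsilon> < norm (relu_grad \<theta>)"
proof -
  define good where "good = {k. \<forall>i\<in>{1..H}. \<not> nondegenerate \<theta>0 i \<longrightarrow> k \<notin> e ` neuron_params i}"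
  define \<phi> where "\<phi> \<theta> = sqrt (\<Sum>k\<in>good. (relu_grad \<theta> $ k)\<^sup>2)" for \<theta>
  have le: "\<phi> \<theta> \<le> norm (relu_grad \<theta>)" for \<theta>
    unfolding \<phi>_def norm_vec_sq by (intro real_sqrt_le_mono sum_mono2) auto
  have "relu_grad \<theta>0 $ k = 0" if k: "k \<notin> good" for k
  proof -
    obtain i where i: "i \<in> {1..H}" "\<not> nondegenerate \<theta>0 i" "k \<in> e ` neuron_params i"
      using k unfolding good_def by blast
    then obtain m where "m \<in> neuron_params i" "k = e m"
      by auto
    then show ?thesis
      using relu_grad_degenerate[OF i(1) _ i(2)] by simp
  qed
  then have "(\<Sum>k\<in>UNIV. (relu_grad \<theta>0 $ k)\<^sup>2) = (\<Sum>k\<in>good. (relu_grad \<theta>0 $ k)\<^sup>2)"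
    by (intro sum.mono_neutral_right) auto
  then have eq: "\<phi> \<theta>0 = norm (relu_grad \<theta>0)"
    unfolding \<phi>_def norm_vec_sq by simp
  have "isCont \<phi> \<theta>0"
    unfolding \<phi>_def good_def by (intro continuous_intros isCont_relu_grad_nth_nondegenerate) auto
  then have "(\<phi> \<longlongrightarrow> \<phi> \<theta>0) (nhds \<theta>0)"
    by (simp add: isCont_def tendsto_at_iff_tendsto_nhds)
  then have "\<forall>\<^sub>F \<theta> in nhds \<theta>0. \<phi> \<theta>0 - \<epsilon> < \<phi> \<theta>"
    by (rule order_tendstoD(1)) (use assms in simp)
  then show ?thesis
  proof eventually_elim
    case (elim \<theta>)
    then show ?case
      using le[of \<theta>] eq by linarith
  qed
qed

lemma has_derivative_relu_loss:
  assumes U: "\<forall>i\<in>{1..H}. nondegenerate \<theta>0 i"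
  shows "(relu_loss has_derivative (\<lambda>h. relu_grad \<theta>0 \<bullet> h)) (at \<theta>0)"
proof -
  have "AE x in \<mu>. \<forall>i\<in>{1..H}. preact \<theta>0 x i \<noteq> 0"
    using U by (subst AE_ball_countable) (auto intro!: AE_preact_nonzero)
  then have der: "AE x in \<mu>. \<forall>i\<in>{1..H}.
      (relu has_real_derivative heaviside (preact \<theta>0 x i)) (at (preact \<theta>0 x i))"
    by eventually_elim (auto intro: relu_has_real_derivative)
  show ?thesis unfolding relu_loss_def[abs_def] relu_grad_def
    by (rule has_derivative_risk[OF relu_measurable heaviside_measurable act_bounded_relu der])
qed

lemma isCont_relu_grad:
  assumes U: "\<forall>i\<in>{1..H}. nondegenerate \<theta>0 i"
  shows "isCont relu_grad \<theta>0"
  by (rule isCont_vecI, rule isCont_relu_grad_nth_nondegenerate) (use U in auto)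

lemma relu_grad_measurable: "relu_grad \<in> borel_measurable borel"
proof (rule borel_measurable_LIMSEQ_metric)
  show "loss_grad (Suc r) \<in> borel_measurable borel" for r
    using continuous_on_loss_grad[of "Suc r"] by (intro borel_measurable_continuous_onI) simp
  show "(\<lambda>r. loss_grad (Suc r) \<theta>) \<longlonglongrightarrow> relu_grad \<theta>" for \<theta>
    using loss_grad_tendsto[of \<theta>] by (rule LIMSEQ_Suc)
qed

lemma relu_loss_nonneg: "relu_loss \<theta> \<ge> 0"
  unfolding relu_loss_def sq_error_def by (rule Bochner_Integration.integral_nonneg) simp

lemma relu_grad_eq_0_if_tendsto:
  assumes lim: "X \<longlonglongrightarrow> v" and small: "(\<lambda>n. norm (relu_grad (X n))) \<longlonglongrightarrow> 0"
  shows "relu_grad v = 0"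
proof -
  have "norm (relu_grad v) \<le> 0 + \<epsilon>" if "\<epsilon> > 0" for \<epsilon>
  proof -
    have "\<forall>\<^sub>F n in sequentially. norm (relu_grad v) - \<epsilon> < norm (relu_grad (X n))"
      using lim relu_grad_norm_lsc[OF that] unfolding filterlim_iff by blast
    then have "norm (relu_grad v) - \<epsilon> \<le> 0"
      by (intro tendsto_lowerbound[OF small]) (auto elim: eventually_mono)
    then show ?thesis
      by simp
  qed
  then show ?thesis
    using field_le_epsilon[of "norm (relu_grad v)" 0] by simp
qed

lemma relu_grad_locally_bounded: "\<exists>\<epsilon>>0. bounded (relu_grad ` ball \<theta> \<epsilon>)"
proof -
  obtain C where C: "\<And>\<theta>'. norm \<theta>' \<le> norm \<theta> + 1 \<Longrightarrow> norm (relu_grad \<theta>') \<le> C"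
    using relu_grad_bounded[of "norm \<theta> + 1"] by auto
  have "norm \<theta>' \<le> norm \<theta> + 1" if "\<theta>' \<in> ball \<theta> 1" for \<theta>'
    using that norm_triangle_ineq2[of \<theta>' \<theta>] by (simp add: dist_norm norm_minus_commute)
  then have "bounded (relu_grad ` ball \<theta> 1)"
    using C unfolding bounded_iff by blast
  then show ?thesis
    by (intro exI[of _ 1]) simp
qed

lemma lower_semicont_norm_relu_grad: "lower_semicont (\<lambda>\<theta>. norm (relu_grad \<theta>))"
  unfolding lower_semicont_def eventually_at_filter
  by (auto elim: eventually_mono[OF relu_grad_norm_lsc])

lemma relu_loss_C1_off_null_set:
  "\<exists>U. open U \<and> (- U) \<in> null_sets lborel
     \<and> (\<forall>\<theta>\<in>U. (relu_loss has_derivative (\<lambda>h. relu_grad \<theta> \<bullet> h)) (at \<theta>))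
     \<and> continuous_on U relu_grad"
  using open_nondegenerate null_sets_degenerate has_derivative_relu_loss isCont_relu_grad
  by (intro exI[of _ "{\<theta>. \<forall>i\<in>{1..H}. nondegenerate \<theta> i}"])
     (auto intro!: continuous_at_imp_continuous_on)

lemma gradient_loss_tendsto: "(\<lambda>r. gradient (loss r) \<theta>) \<longlonglongrightarrow> relu_grad \<theta>"
proof -
  have "(\<lambda>r. gradient (loss (Suc r)) \<theta>) = (\<lambda>r. loss_grad (Suc r) \<theta>)"
    using gradient_eqI[OF has_derivative_loss] by simp
  then show ?thesis
    using LIMSEQ_Suc[OF loss_grad_tendsto[of \<theta>]] by (simp add: LIMSEQ_imp_Suc)
qed

end

section \<open>Gradient flow\<close>

locale gradient_flow = relu_approx d H e c a b f \<mu> R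
  for d H :: nat and e :: "nat \<Rightarrow> 'n::finite" and c :: "nat \<Rightarrow> 'd::finite"
    and a b :: real and f :: "real^'d \<Rightarrow> real" and \<mu> :: "(real^'d) measure"
    and R :: "nat \<Rightarrow> real \<Rightarrow> real" +
  fixes \<Theta> :: "real \<Rightarrow> real^'n"
  assumes \<Theta>_cont: "continuous_on {0..} \<Theta>" and \<Theta>_bounded: "bounded (\<Theta> ` {0..})"
    and \<Theta>_integral_eq: "\<forall>t\<ge>0. \<Theta> t = \<Theta> 0 - integral {0..t} (\<lambda>s. relu_grad (\<Theta> s))"
begin

definition flow_radius :: real where
  "flow_radius = (SOME \<rho>. \<rho> \<ge> 0 \<and> (\<forall>t\<ge>0. norm (\<Theta> t) \<le> \<rho>))"

lemma flow_radius: "flow_radius \<ge> 0" "t \<ge> 0 \<Longrightarrow> norm (\<Theta> t) \<le> flow_radius"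
proof -
  obtain A where "\<forall>x\<in>\<Theta> ` {0..}. norm x \<le> A"
    using \<Theta>_bounded unfolding bounded_iff by blast
  then have "\<exists>\<rho>. \<rho> \<ge> 0 \<and> (\<forall>t\<ge>0. norm (\<Theta> t) \<le> \<rho>)"
    by (intro exI[of _ "max A 0"]) (auto simp: le_max_iff_disj)
  from someI_ex[OF this] show "flow_radius \<ge> 0" "t \<ge> 0 \<Longrightarrow> norm (\<Theta> t) \<le> flow_radius"
    unfolding flow_radius_def by auto
qed

definition speed_bound :: real where
  "speed_bound = (SOME M. M \<ge> 0 \<and> (\<forall>\<theta>. norm \<theta> \<le> flow_radius \<longrightarrow> norm (relu_grad \<theta>) \<le> M))"

lemma speed_bound: "speed_bound \<ge> 0" "norm \<theta> \<le> flow_radius \<Longrightarrow> norm (relu_grad \<theta>) \<le> speed_bound"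
proof -
  obtain C where "\<forall>\<theta>. norm \<theta> \<le> flow_radius \<longrightarrow> norm (relu_grad \<theta>) \<le> C"
    using relu_grad_bounded[OF flow_radius(1)] by blast
  then have "\<exists>M. M \<ge> 0 \<and> (\<forall>\<theta>. norm \<theta> \<le> flow_radius \<longrightarrow> norm (relu_grad \<theta>) \<le> M)"
    by (intro exI[of _ "max C 0"]) force
  from someI_ex[OF this]
  show "speed_bound \<ge> 0" "norm \<theta> \<le> flow_radius \<Longrightarrow> norm (relu_grad \<theta>) \<le> speed_bound"
    unfolding speed_bound_def by auto
qed

lemma norm_relu_grad_flow_le: "t \<ge> 0 \<Longrightarrow> norm (relu_grad (\<Theta> t)) \<le> speed_bound"
  using speed_bound(2) flow_radius(2) by blast

lemma integrable_on_flow: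
  fixes F :: "real^'n \<Rightarrow> 'b::euclidean_space"
  assumes F_meas: "F \<in> borel_measurable borel"
    and F_bound: "\<And>\<theta>. norm \<theta> \<le> flow_radius \<Longrightarrow> norm (F \<theta>) \<le> B" and x: "0 \<le> x"
  shows "(\<lambda>s. F (\<Theta> s)) integrable_on {x..y}"
proof -
  define \<Theta>' where "\<Theta>' s = \<Theta> (max s 0)" for s
    \<comment> \<open>a Borel function on the whole line that agrees with \<open>\<Theta>\<close> on \<open>[0,\<infinity>)\<close>\<close>
  have "continuous_on UNIV \<Theta>'"
    unfolding \<Theta>'_def by (rule continuous_on_compose2[OF \<Theta>_cont]) (auto intro!: continuous_intros)
  then have "\<Theta>' \<in> borel_measurable borel"
    by (rule borel_measurable_continuous_onI)
  then have "(\<lambda>s. F (\<Theta>' s)) \<in> borel_measurable borel"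
    using F_meas by (rule measurable_compose)
  moreover have "norm (F (\<Theta>' s)) \<le> B" for s
    using F_bound flow_radius(2)[of "max s 0"] unfolding \<Theta>'_def by simp
  ultimately have "(\<lambda>s. F (\<Theta>' s)) integrable_on {x..y}"
    by (rule bounded_measurable_integrable_on_Icc)
  moreover have "(\<lambda>s. F (\<Theta> s)) integrable_on {x..y} \<longleftrightarrow> (\<lambda>s. F (\<Theta>' s)) integrable_on {x..y}"
    by (rule integrable_cong) (use x in \<open>simp add: \<Theta>'_def\<close>)
  ultimately show ?thesis
    by simp
qed

lemma integrable_on_relu_grad_flow: "0 \<le> x \<Longrightarrow> (\<lambda>s. relu_grad (\<Theta> s)) integrable_on {x..y}"
  by (rule integrable_on_flow[OF relu_grad_measurable speed_bound(2)])

lemma integrable_on_norm_relu_grad_flow: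
  "0 \<le> x \<Longrightarrow> (\<lambda>s. (norm (relu_grad (\<Theta> s)))\<^sup>2) integrable_on {x..y}"
  by (rule integrable_on_flow[where B="speed_bound\<^sup>2"])
     (use relu_grad_measurable speed_bound in \<open>auto intro!: power_mono\<close>)

lemma flow_diff_eq:
  assumes "0 \<le> t" "t \<le> u"
  shows "\<Theta> u - \<Theta> t = - integral {t..u} (\<lambda>s. relu_grad (\<Theta> s))"
proof -
  have combine: "integral {0..u} (\<lambda>s. relu_grad (\<Theta> s))
      = integral {0..t} (\<lambda>s. relu_grad (\<Theta> s)) + integral {t..u} (\<lambda>s. relu_grad (\<Theta> s))"
    by (rule Henstock_Kurzweil_Integration.integral_combine[symmetric])
       (use assms integrable_on_relu_grad_flow in auto)
  have "\<Theta> t = \<Theta> 0 - integral {0..t} (\<lambda>s. relu_grad (\<Theta> s))"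
    "\<Theta> u = \<Theta> 0 - integral {0..u} (\<lambda>s. relu_grad (\<Theta> s))"
    using assms by (auto intro!: \<Theta>_integral_eq[rule_format])
  then have "\<Theta> u - \<Theta> t = integral {0..t} (\<lambda>s. relu_grad (\<Theta> s)) - integral {0..u} (\<lambda>s. relu_grad (\<Theta> s))"
    by (simp only:) (simp add: algebra_simps)
  then show ?thesis
    unfolding combine by simp
qed

lemma flow_lipschitz:
  assumes "t \<ge> 0" "u \<ge> 0"
  shows "norm (\<Theta> u - \<Theta> t) \<le> speed_bound * \<bar>u - t\<bar>"
proof -
  have "norm (\<Theta> u - \<Theta> t) \<le> speed_bound * (u - t)" if "0 \<le> t" "t \<le> u" for t u
  proof -
    have "norm (integral (cbox t u) (\<lambda>s. relu_grad (\<Theta> s))) \<le> speed_bound * measure lborel (cbox t u)"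
      by (rule has_integral_bound[OF speed_bound(1) integrable_integral])
         (use that integrable_on_relu_grad_flow norm_relu_grad_flow_le in auto)
    then show ?thesis
      using flow_diff_eq[OF that] that by simp
  qed
  from this[of t u] this[of u t] assms show ?thesis
    by (cases "t \<le> u") (auto simp: norm_minus_commute)
qed

lemma inner_flow_eq:
  assumes "u \<ge> 0"
  shows "q \<bullet> \<Theta> u = q \<bullet> \<Theta> 0 - integral {0..u} (\<lambda>s. q \<bullet> relu_grad (\<Theta> s))"
proof -
  have "q \<bullet> integral {0..u} (\<lambda>s. relu_grad (\<Theta> s)) = integral {0..u} (\<lambda>s. q \<bullet> relu_grad (\<Theta> s))"
    using integral_linear[OF integrable_on_relu_grad_flow bounded_linear_inner_right[of q]]
    by (simp add: o_def)
  moreover have "\<Theta> u = \<Theta> 0 - integral {0..u} (\<lambda>s. relu_grad (\<Theta> s))"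
    using assms by (auto intro!: \<Theta>_integral_eq[rule_format])
  ultimately show ?thesis
    by (simp add: inner_diff_right)
qed

lemma loss_grad_flow_bounded:
  obtains C where "C \<ge> 0" "\<And>r s. r \<ge> 1 \<Longrightarrow> s \<ge> 0 \<Longrightarrow> norm (loss_grad r (\<Theta> s)) \<le> C"
proof -
  obtain C where C: "\<And>r \<theta>. r \<ge> 1 \<Longrightarrow> norm \<theta> \<le> flow_radius \<Longrightarrow> norm (loss_grad r \<theta>) \<le> C"
    using loss_grad_bounded[OF flow_radius(1)] by blast
  have "norm (loss_grad 1 0) \<le> C"
    using C[of 1 0] flow_radius(1) by simp
  then have "C \<ge> 0"
    using norm_ge_zero order_trans by blast
  then show thesis
    using that C flow_radius(2) by blast
qed

lemma integrable_on_loss_grad_flow: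
  assumes "r \<ge> 1" "0 \<le> x"
  shows "(\<lambda>s. (loss_grad r (\<Theta> s) - q) \<bullet> relu_grad (\<Theta> s)) integrable_on {x..y}"
proof -
  obtain C where C: "\<And>\<theta>. norm \<theta> \<le> flow_radius \<Longrightarrow> norm (loss_grad r \<theta>) \<le> C"
    using loss_grad_bounded[OF flow_radius(1)] assms(1) by blast
  have "norm ((loss_grad r \<theta> - q) \<bullet> relu_grad \<theta>) \<le> (C + norm q) * speed_bound"
    if "norm \<theta> \<le> flow_radius" for \<theta>
  proof -
    have "norm ((loss_grad r \<theta> - q) \<bullet> relu_grad \<theta>) \<le> norm (loss_grad r \<theta> - q) * norm (relu_grad \<theta>)"
      using Cauchy_Schwarz_ineq2 by simp
    also have "\<dots> \<le> (C + norm q) * speed_bound"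
      using C[OF that] speed_bound(2)[OF that] norm_triangle_ineq4[of "loss_grad r \<theta>" q]
        order_trans[OF norm_ge_zero C[OF that]]
      by (intro mult_mono) auto
    finally show ?thesis .
  qed
  moreover have "(\<lambda>\<theta>. (loss_grad r \<theta> - q) \<bullet> relu_grad \<theta>) \<in> borel_measurable borel"
    using borel_measurable_continuous_onI[OF continuous_on_loss_grad[OF assms(1)]] relu_grad_measurable
    by measurable
  ultimately show ?thesis
    by (intro integrable_on_flow[where B="(C + norm q) * speed_bound"] assms(2))
qed

lemma tendsto_loss_grad_defect_flow:
  assumes r: "r \<ge> 1" and u: "u \<in> {0..t}"
  shows "((\<lambda>s. (loss_grad r (\<Theta> s) - loss_grad r (\<Theta> u)) \<bullet> relu_grad (\<Theta> s)) \<longlongrightarrow> 0)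
    (at u within {0..t})"
proof -
  define q where "q = loss_grad r (\<Theta> u)"
  have "continuous_on {0..} (\<lambda>s. loss_grad r (\<Theta> s))"
    using continuous_on_compose2[OF continuous_on_loss_grad[OF r] \<Theta>_cont] by auto
  then have "continuous_on {0..t} (\<lambda>s. loss_grad r (\<Theta> s))"
    by (rule continuous_on_subset) auto
  then have "((\<lambda>s. loss_grad r (\<Theta> s)) \<longlongrightarrow> q) (at u within {0..t})"
    using u unfolding q_def continuous_on_def by blast
  then have "((\<lambda>s. norm (loss_grad r (\<Theta> s) - q) * speed_bound) \<longlongrightarrow> 0) (at u within {0..t})"
    by (intro tendsto_mult_left_zero tendsto_norm_zero LIM_zero)
  moreover have "norm ((loss_grad r (\<Theta> s) - q) \<bullet> relu_grad (\<Theta> s))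
      \<le> norm (loss_grad r (\<Theta> s) - q) * speed_bound" if "s \<in> {0..t}" for s
  proof -
    have "norm ((loss_grad r (\<Theta> s) - q) \<bullet> relu_grad (\<Theta> s))
        \<le> norm (loss_grad r (\<Theta> s) - q) * norm (relu_grad (\<Theta> s))"
      using Cauchy_Schwarz_ineq2 by simp
    also have "\<dots> \<le> norm (loss_grad r (\<Theta> s) - q) * speed_bound"
      using norm_relu_grad_flow_le that by (intro mult_left_mono) auto
    finally show ?thesis .
  qed
  then have "\<forall>\<^sub>F s in at u within {0..t}.
      norm ((loss_grad r (\<Theta> s) - q) \<bullet> relu_grad (\<Theta> s)) \<le> norm (loss_grad r (\<Theta> s) - q) * speed_bound"
    unfolding eventually_at_filter by (intro always_eventually) blast
  ultimately show ?thesis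
    unfolding q_def by (rule Lim_null_comparison[rotated])
qed

lemma integral_loss_grad_flow_eq:
  assumes r: "r \<ge> 1" and v: "v \<ge> 0"
  shows "q \<bullet> \<Theta> 0 + integral {0..v} (\<lambda>s. (loss_grad r (\<Theta> s) - q) \<bullet> relu_grad (\<Theta> s))
    = q \<bullet> \<Theta> v + integral {0..v} (\<lambda>s. loss_grad r (\<Theta> s) \<bullet> relu_grad (\<Theta> s))"
proof -
  have "(\<lambda>s. q \<bullet> relu_grad (\<Theta> s)) integrable_on {0..v}"
    using integrable_linear[OF integrable_on_relu_grad_flow bounded_linear_inner_right[of q]]
    by (simp add: o_def)
  then have "integral {0..v} (\<lambda>s. (loss_grad r (\<Theta> s) - q) \<bullet> relu_grad (\<Theta> s))
      = integral {0..v} (\<lambda>s. loss_grad r (\<Theta> s) \<bullet> relu_grad (\<Theta> s))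
        - integral {0..v} (\<lambda>s. q \<bullet> relu_grad (\<Theta> s))"
    unfolding inner_diff_left
    using integrable_on_loss_grad_flow[OF r, of 0 0 v]
    by (intro Henstock_Kurzweil_Integration.integral_diff) auto
  then show ?thesis
    using inner_flow_eq[OF v, of q] by simp
qed

text \<open>Although \<open>\<Theta>\<close> need not be differentiable, the defect of the chain rule for \<open>\<L>\<^sub>r \<circ> \<Theta>\<close>
  at \<open>u\<close> is an integral whose integrand is continuous at \<open>u\<close> with value \<open>0\<close>.\<close>

lemma has_field_derivative_loss_flow:
  assumes r: "r \<ge> 1" and u: "u \<in> {0..t}"
  shows "((\<lambda>v. loss r (\<Theta> v) + integral {0..v} (\<lambda>s. loss_grad r (\<Theta> s) \<bullet> relu_grad (\<Theta> s)))
    has_field_derivative 0) (at u within {0..t})"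
proof -
  define q where "q = loss_grad r (\<Theta> u)"
  define h where "h = (\<lambda>s. (loss_grad r (\<Theta> s) - q) \<bullet> relu_grad (\<Theta> s))"
  have remainder: "((\<lambda>v. loss r (\<Theta> v) - q \<bullet> \<Theta> v) has_field_derivative 0) (at u within {0..t})"
    unfolding q_def
    by (rule lipschitz_chain_remainder[OF has_derivative_loss[OF r]])
       (use flow_lipschitz u speed_bound(1) in auto)
  have "continuous (at u within {0..t}) h"
    using tendsto_loss_grad_defect_flow[OF r u] by (simp add: continuous_within h_def q_def)
  moreover have "h integrable_on {0..t}"
    unfolding h_def by (rule integrable_on_loss_grad_flow[OF r]) simp
  ultimately have "((\<lambda>v. integral {0..v} h) has_field_derivative 0) (at u within {0..t})"
    using integral_has_vector_derivative_continuous_at[of h 0 t u "{}"] u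
    by (simp add: has_real_derivative_iff_has_vector_derivative h_def q_def)
  from DERIV_add[OF DERIV_const[of "q \<bullet> \<Theta> 0"] this]
  have "((\<lambda>v. q \<bullet> \<Theta> 0 + integral {0..v} h) has_field_derivative 0) (at u within {0..t})"
    by simp
  then have "((\<lambda>v. q \<bullet> \<Theta> v + integral {0..v} (\<lambda>s. loss_grad r (\<Theta> s) \<bullet> relu_grad (\<Theta> s)))
      has_field_derivative 0) (at u within {0..t})"
    by (rule has_field_derivative_transform_within[OF _ zero_less_one u])
       (simp add: h_def integral_loss_grad_flow_eq[OF r])
  from DERIV_add[OF remainder this] show ?thesis
    by simp
qed

lemma energy_identity_loss:
  assumes "r \<ge> 1" "t \<ge> 0"
  shows "loss r (\<Theta> t) + integral {0..t} (\<lambda>s. loss_grad r (\<Theta> s) \<bullet> relu_grad (\<Theta> s)) = loss r (\<Theta> 0)"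
proof -
  obtain C where "\<forall>v\<in>{0..t}.
      loss r (\<Theta> v) + integral {0..v} (\<lambda>s. loss_grad r (\<Theta> s) \<bullet> relu_grad (\<Theta> s)) = C"
    using has_field_derivative_zero_constant[OF convex_real_interval(5) has_field_derivative_loss_flow]
      assms(1) by blast
  from this[rule_format, of 0] this[rule_format, of t] assms(2) show ?thesis
    by simp
qed

lemma energy_identity:
  assumes t: "t \<ge> 0"
  shows "relu_loss (\<Theta> t) + integral {0..t} (\<lambda>s. (norm (relu_grad (\<Theta> s)))\<^sup>2) = relu_loss (\<Theta> 0)"
proof -
  obtain C where C: "C \<ge> 0" "\<And>r s. r \<ge> 1 \<Longrightarrow> s \<ge> 0 \<Longrightarrow> norm (loss_grad r (\<Theta> s)) \<le> C"
    using loss_grad_flow_bounded by metis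
  have "(\<lambda>r. integral {0..t} (\<lambda>s. loss_grad (Suc r) (\<Theta> s) \<bullet> relu_grad (\<Theta> s)))
      \<longlonglongrightarrow> integral {0..t} (\<lambda>s. relu_grad (\<Theta> s) \<bullet> relu_grad (\<Theta> s))"
  proof (rule dominated_convergence(2)[where h="\<lambda>_. C * speed_bound"])
    show "(\<lambda>s. loss_grad (Suc r) (\<Theta> s) \<bullet> relu_grad (\<Theta> s)) integrable_on {0..t}" for r
      using integrable_on_loss_grad_flow[of "Suc r" 0 0 t] by simp
    show "norm (loss_grad (Suc r) (\<Theta> s) \<bullet> relu_grad (\<Theta> s)) \<le> C * speed_bound"
      if "s \<in> {0..t}" for r s
    proof -
      have "norm (loss_grad (Suc r) (\<Theta> s) \<bullet> relu_grad (\<Theta> s))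
          \<le> norm (loss_grad (Suc r) (\<Theta> s)) * norm (relu_grad (\<Theta> s))"
        using Cauchy_Schwarz_ineq2 by simp
      also have "\<dots> \<le> C * speed_bound"
        using C norm_relu_grad_flow_le that by (intro mult_mono) auto
      finally show ?thesis .
    qed
    show "(\<lambda>r. loss_grad (Suc r) (\<Theta> s) \<bullet> relu_grad (\<Theta> s)) \<longlonglongrightarrow> relu_grad (\<Theta> s) \<bullet> relu_grad (\<Theta> s)"
      for s
      by (intro tendsto_inner tendsto_const LIMSEQ_Suc[OF loss_grad_tendsto])
  qed (rule Henstock_Kurzweil_Integration.integrable_const_ivl)
  then have "(\<lambda>r. loss (Suc r) (\<Theta> t) + integral {0..t} (\<lambda>s. loss_grad (Suc r) (\<Theta> s) \<bullet> relu_grad (\<Theta> s)))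
      \<longlonglongrightarrow> relu_loss (\<Theta> t) + integral {0..t} (\<lambda>s. (norm (relu_grad (\<Theta> s)))\<^sup>2)"
    by (intro tendsto_add LIMSEQ_Suc[OF loss_tendsto]) (simp add: power2_norm_eq_inner)
  moreover have "(\<lambda>r. loss (Suc r) (\<Theta> 0)) \<longlonglongrightarrow> relu_loss (\<Theta> 0)"
    by (rule LIMSEQ_Suc[OF loss_tendsto])
  ultimately show ?thesis
    using energy_identity_loss[OF _ t] by (simp add: LIMSEQ_unique)
qed

lemma relu_loss_flow_antimono:
  assumes "0 \<le> s" "s \<le> t"
  shows "relu_loss (\<Theta> t) \<le> relu_loss (\<Theta> s)"
proof -
  have "integral {0..s} (\<lambda>u. (norm (relu_grad (\<Theta> u)))\<^sup>2) + integral {s..t} (\<lambda>u. (norm (relu_grad (\<Theta> u)))\<^sup>2)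
     = integral {0..t} (\<lambda>u. (norm (relu_grad (\<Theta> u)))\<^sup>2)"
    by (rule Henstock_Kurzweil_Integration.integral_combine)
       (use assms integrable_on_norm_relu_grad_flow in auto)
  moreover have "0 \<le> integral {s..t} (\<lambda>u. (norm (relu_grad (\<Theta> u)))\<^sup>2)"
    by (rule Henstock_Kurzweil_Integration.integral_nonneg)
       (use assms integrable_on_norm_relu_grad_flow in auto)
  ultimately show ?thesis
    using energy_identity[of s] energy_identity[of t] assms by linarith
qed

text \<open>Otherwise the energy identity would make \<open>\<L>\<^sub>\<infinity>(\<Theta>\<^sub>t)\<close> negative for large \<open>t\<close>.\<close>

lemma flow_small_grad_late:
  assumes e: "\<epsilon> > 0" and T: "T \<ge> 0"
  shows "\<exists>t\<ge>T. norm (relu_grad (\<Theta> t)) < \<epsilon>"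
proof (rule ccontr)
  assume "\<not> ?thesis"
  then have big: "\<epsilon>\<^sup>2 \<le> (norm (relu_grad (\<Theta> t)))\<^sup>2" if "t \<ge> T" for t
    using that e by (auto intro!: power_mono simp: not_less)
  define T' where "T' = T + relu_loss (\<Theta> 0) / \<epsilon>\<^sup>2 + 1"
  have TT': "T \<le> T'"
    unfolding T'_def using relu_loss_nonneg[of "\<Theta> 0"] e by simp
  have "integral {T..T'} (\<lambda>_. \<epsilon>\<^sup>2) \<le> integral {T..T'} (\<lambda>u. (norm (relu_grad (\<Theta> u)))\<^sup>2)"
    by (rule integral_le) (use big integrable_on_norm_relu_grad_flow[OF T] in auto)
  moreover have "integral {T..T'} (\<lambda>_. \<epsilon>\<^sup>2) = relu_loss (\<Theta> 0) + \<epsilon>\<^sup>2"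
    unfolding T'_def using e TT' relu_loss_nonneg[of "\<Theta> 0"] by (simp add: field_simps)
  moreover have "integral {0..T} (\<lambda>u. (norm (relu_grad (\<Theta> u)))\<^sup>2)
      + integral {T..T'} (\<lambda>u. (norm (relu_grad (\<Theta> u)))\<^sup>2)
      = integral {0..T'} (\<lambda>u. (norm (relu_grad (\<Theta> u)))\<^sup>2)"
    by (rule Henstock_Kurzweil_Integration.integral_combine)
       (use T TT' integrable_on_norm_relu_grad_flow in auto)
  moreover have "0 \<le> integral {0..T} (\<lambda>u. (norm (relu_grad (\<Theta> u)))\<^sup>2)"
    by (rule Henstock_Kurzweil_Integration.integral_nonneg)
       (use integrable_on_norm_relu_grad_flow in auto)
  moreover have "\<epsilon>\<^sup>2 > 0"
    using e by simp
  ultimately show False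
    using energy_identity[of T'] relu_loss_nonneg[of "\<Theta> T'"] T TT' by linarith
qed

lemma flow_critical_limit_point:
  obtains \<tau> v where "\<And>n. \<tau> n \<ge> real n" "(\<lambda>n. \<Theta> (\<tau> n)) \<longlonglongrightarrow> v" "relu_grad v = 0"
proof -
  have "\<forall>n::nat. \<exists>t. t \<ge> real n \<and> norm (relu_grad (\<Theta> t)) < inverse (real (Suc n))"
    using flow_small_grad_late by simp
  from choice[OF this] obtain \<tau>
    where \<tau>: "\<And>n. \<tau> n \<ge> real n" "\<And>n. norm (relu_grad (\<Theta> (\<tau> n))) < inverse (real (Suc n))"
    by blast
  have "range (\<lambda>n. \<Theta> (\<tau> n)) \<subseteq> \<Theta> ` {0..}"
    using \<tau>(1) order_trans[OF of_nat_0_le_iff] by blast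
  then obtain v \<sigma> where \<sigma>: "strict_mono \<sigma>" and lim: "(\<lambda>n. \<Theta> (\<tau> (\<sigma> n))) \<longlonglongrightarrow> v"
    using bounded_imp_convergent_subsequence[OF bounded_subset[OF \<Theta>_bounded]]
    unfolding o_def by blast
  have "norm (relu_grad (\<Theta> (\<tau> (\<sigma> n)))) \<le> inverse (real (Suc n))" for n
  proof -
    have "inverse (real (Suc (\<sigma> n))) \<le> inverse (real (Suc n))"
      using seq_suble[OF \<sigma>, of n] by (simp add: le_imp_inverse_le)
    then show ?thesis
      using \<tau>(2)[of "\<sigma> n"] by linarith
  qed
  then have "(\<lambda>n. norm (relu_grad (\<Theta> (\<tau> (\<sigma> n))))) \<longlonglongrightarrow> 0"
    by (intro tendsto_sandwich[OF _ _ tendsto_const LIMSEQ_inverse_real_of_nat]) auto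
  then have "relu_grad v = 0"
    by (rule relu_grad_eq_0_if_tendsto[OF lim])
  moreover have "\<tau> (\<sigma> n) \<ge> real n" for n
    using \<tau>(1)[of "\<sigma> n"] seq_suble[OF \<sigma>, of n] by linarith
  ultimately show thesis
    using that[of "\<lambda>n. \<tau> (\<sigma> n)" v] lim by blast
qed

lemma relu_loss_flow_tendsto:
  assumes \<tau>: "\<And>n. \<tau> n \<ge> real n" and lim: "(\<lambda>n. \<Theta> (\<tau> n)) \<longlonglongrightarrow> v"
  shows "((\<lambda>t. relu_loss (\<Theta> t)) \<longlongrightarrow> relu_loss v) at_top" and "relu_loss v \<le> relu_loss (\<Theta> 0)"
proof -
  have loss_lim: "(\<lambda>n. relu_loss (\<Theta> (\<tau> n))) \<longlonglongrightarrow> relu_loss v"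
    using continuous_on_relu_loss lim
    by (intro isCont_tendsto_compose[OF _ lim]) (simp add: continuous_on_eq_continuous_at)
  have lower: "relu_loss v \<le> relu_loss (\<Theta> t)" if t: "t \<ge> 0" for t
  proof (rule LIMSEQ_le_const2[OF loss_lim], intro exI[of _ "nat \<lceil>t\<rceil>"] allI impI)
    fix n assume "nat \<lceil>t\<rceil> \<le> n"
    then have "t \<le> \<tau> n"
      using \<tau>[of n] by linarith
    then show "relu_loss (\<Theta> (\<tau> n)) \<le> relu_loss (\<Theta> t)"
      by (rule relu_loss_flow_antimono[OF t])
  qed
  then show "relu_loss v \<le> relu_loss (\<Theta> 0)"
    by simp
  show "((\<lambda>t. relu_loss (\<Theta> t)) \<longlongrightarrow> relu_loss v) at_top"
  proof (rule order_tendstoI)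
    fix y assume y: "y < relu_loss v"
    show "\<forall>\<^sub>F t in at_top. y < relu_loss (\<Theta> t)"
      unfolding eventually_at_top_linorder
    proof (intro exI[of _ 0] allI impI)
      fix t :: real assume "0 \<le> t"
      then show "y < relu_loss (\<Theta> t)"
        using lower[of t] y by linarith
    qed
  next
    fix y assume "relu_loss v < y"
    then obtain n where n: "relu_loss (\<Theta> (\<tau> n)) < y"
      using order_tendstoD(2)[OF loss_lim] by (auto simp: eventually_sequentially)
    have \<tau>_nonneg: "\<tau> n \<ge> 0"
      using \<tau>[of n] by linarith
    show "\<forall>\<^sub>F t in at_top. relu_loss (\<Theta> t) < y"
      unfolding eventually_at_top_linorder
    proof (intro exI[of _ "\<tau> n"] allI impI)
      fix t assume "\<tau> n \<le> t"
      then show "relu_loss (\<Theta> t) < y"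
        using relu_loss_flow_antimono[OF \<tau>_nonneg] n by fastforce
    qed
  qed
qed

lemma limsup_relu_loss_flow:
  "\<exists>v. relu_grad v = 0 \<and> Limsup at_top (\<lambda>t. ereal (relu_loss (\<Theta> t))) = ereal (relu_loss v)
     \<and> relu_loss v \<le> relu_loss (\<Theta> 0)"
proof -
  obtain \<tau> v where \<tau>: "\<And>n. \<tau> n \<ge> real n" "(\<lambda>n. \<Theta> (\<tau> n)) \<longlonglongrightarrow> v" "relu_grad v = 0"
    by (rule flow_critical_limit_point) blast
  have "Limsup at_top (\<lambda>t. ereal (relu_loss (\<Theta> t))) = ereal (relu_loss v)"
    using relu_loss_flow_tendsto(1)[OF \<tau>(1,2)] by (intro lim_imp_Limsup) simp_all
  then show ?thesis
    using \<tau>(3) relu_loss_flow_tendsto(2)[OF \<tau>(1,2)] by blast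
qed

end

context relu_approx
begin

lemma limsup_relu_loss_flow_critical:
  fixes \<Theta> :: "real \<Rightarrow> real^'n"
  assumes "continuous_on {0..} \<Theta>" "bounded (\<Theta> ` {0..})"
    and "\<forall>t\<ge>0. \<Theta> t = \<Theta> 0 - integral {0..t} (\<lambda>s. relu_grad (\<Theta> s))"
  shows "\<exists>v. relu_grad v = 0 \<and> Limsup at_top (\<lambda>t. ereal (relu_loss (\<Theta> t))) = ereal (relu_loss v)"
proof -
  interpret gradient_flow d H e c a b f \<mu> R \<Theta>
    by unfold_locales (fact assms)+
  show ?thesis
    using limsup_relu_loss_flow by blast
qed

lemma limsup_relu_loss_flow_Inf:
  fixes \<Theta> :: "real \<Rightarrow> real^'n"
  assumes "continuous_on {0..} \<Theta>" "bounded (\<Theta> ` {0..})"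
    and "\<forall>t\<ge>0. \<Theta> t = \<Theta> 0 - integral {0..t} (\<lambda>s. relu_grad (\<Theta> s))"
    and below: "\<forall>\<theta>. relu_grad \<theta> = 0 \<and> ereal (relu_loss \<theta>) > (INF v. ereal (relu_loss v))
      \<longrightarrow> relu_loss (\<Theta> 0) < relu_loss \<theta>"
  shows "Limsup at_top (\<lambda>t. ereal (relu_loss (\<Theta> t))) = (INF v. ereal (relu_loss v))"
proof -
  interpret gradient_flow d H e c a b f \<mu> R \<Theta>
    by unfold_locales (fact assms)+
  obtain v where v: "relu_grad v = 0" "Limsup at_top (\<lambda>t. ereal (relu_loss (\<Theta> t))) = ereal (relu_loss v)"
    "relu_loss v \<le> relu_loss (\<Theta> 0)"
    using limsup_relu_loss_flow by blast
  have "(INF w. ereal (relu_loss w)) \<le> ereal (relu_loss v)"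
    by (rule INF_lower) simp
  moreover have "\<not> ereal (relu_loss v) > (INF w. ereal (relu_loss w))"
    using below v(1,3) by force
  ultimately show ?thesis
    using v(2) by simp
qed

end

theorem theorem1p1:
  fixes d H :: nat and a b :: real
    and e :: "nat \<Rightarrow> 'n::finite" and c :: "nat \<Rightarrow> 'd::finite"
    and f :: "real^'d \<Rightarrow> real"
    and R :: "nat \<Rightarrow> real \<Rightarrow> real"
    and \<mu> :: "(real^'d) measure"
    and L :: "nat \<Rightarrow> real^'n \<Rightarrow> real" and Linf :: "real^'n \<Rightarrow> real"
    and G :: "real^'n \<Rightarrow> real^'n"
  assumes dpos: "d \<ge> 1" and Hpos: "H \<ge> 1"
    and ab: "a < b"
    and e_bij: "bij_betw e {1..d*H + 2*H + 1} UNIV"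
    and c_bij: "bij_betw c {1..d} UNIV"
    and f_cont: "continuous_on (cube a b) f"
    and R_C1: "\<forall>r\<ge>1. R r C1_differentiable_on UNIV"
    and R_bdd: "\<forall>x. bdd_above {\<bar>R r y\<bar> + \<bar>deriv (R r) y\<bar> | r y. r \<ge> 1 \<and> y \<in> {-\<bar>x\<bar>..\<bar>x\<bar>}}"
    and R_lim: "\<forall>x. limsup (\<lambda>r. ereal (\<bar>R r x - max x 0\<bar>
                      + \<bar>deriv (R r) x - indicator {0<..} x\<bar>)) = 0"
    and mu_sets: "sets \<mu> = sets (restrict_space lborel (cube a b))"
    and mu_fin: "finite_measure \<mu>"
    and mu_ac: "absolutely_continuous (restrict_space lborel (cube a b)) \<mu>"
    and L_def: "\<forall>r \<theta>. L r \<theta> = nn_loss \<mu> f d H e c (R r) \<theta>"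
    and Linf_def: "\<forall>\<theta>. Linf \<theta> = nn_loss \<mu> f d H e c (\<lambda>y. max y 0) \<theta>"
    and G_def: "\<forall>\<theta>. convergent (\<lambda>r. gradient (L r) \<theta>) \<longrightarrow>
                   G \<theta> = lim (\<lambda>r. gradient (L r) \<theta>)"
  shows
    "((\<forall>\<theta>. \<exists>\<epsilon>>0. bounded (G ` ball \<theta> \<epsilon>)) \<and> G \<in> borel_measurable borel)
     \<and> lower_semicont (\<lambda>\<theta>. norm (G \<theta>))
     \<and> (\<exists>U. open U \<and> (- U) \<in> null_sets lborel
           \<and> (\<forall>\<theta>\<in>U. (Linf has_derivative (\<lambda>h. G \<theta> \<bullet> h)) (at \<theta>))
           \<and> continuous_on U G)
     \<and> (\<forall>\<Theta> :: real \<Rightarrow> real^'n.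
          continuous_on {0..} \<Theta> \<and> bounded (\<Theta> ` {0..})
          \<and> (\<forall>t\<ge>0. \<Theta> t = \<Theta> 0 - integral {0..t} (\<lambda>s. G (\<Theta> s)))
          \<longrightarrow> (\<exists>v. G v = 0 \<and>
                 Limsup at_top (\<lambda>t. ereal (Linf (\<Theta> t))) = ereal (Linf v)))
     \<and> (\<forall>\<Theta> :: real \<Rightarrow> real^'n.
          continuous_on {0..} \<Theta> \<and> bounded (\<Theta> ` {0..})
          \<and> (\<forall>t\<ge>0. \<Theta> t = \<Theta> 0 - integral {0..t} (\<lambda>s. G (\<Theta> s)))
          \<and> (\<forall>\<theta>. G \<theta> = 0 \<and> ereal (Linf \<theta>) > (INF v. ereal (Linf v))
                 \<longrightarrow> Linf (\<Theta> 0) < Linf \<theta>)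
          \<longrightarrow> Limsup at_top (\<lambda>t. ereal (Linf (\<Theta> t))) = (INF v. ereal (Linf v)))"
proof -
  interpret relu_approx d H e c a b f \<mu> R
    by (intro relu_approx.intro shallow_net.intro relu_approx_axioms.intro
        e_bij c_bij f_cont mu_sets mu_fin mu_ac R_C1 R_bdd R_lim)
  have L: "L = loss"
    using L_def by (auto simp: nn_loss_eq loss_def fun_eq_iff)
  have Linf: "Linf = relu_loss"
    using Linf_def by (auto simp: nn_loss_eq relu_loss_def fun_eq_iff)
  have G: "G = relu_grad"
  proof
    fix \<theta>
    have "(\<lambda>r. gradient (L r) \<theta>) \<longlonglongrightarrow> relu_grad \<theta>"
      unfolding L by (rule gradient_loss_tendsto)
    then show "G \<theta> = relu_grad \<theta>"
      using G_def by (auto simp: convergent_def limI)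
  qed
  show ?thesis
    unfolding Linf G
    by (intro conjI allI impI relu_grad_locally_bounded relu_grad_measurable
        lower_semicont_norm_relu_grad relu_loss_C1_off_null_set)
       (elim conjE; blast intro: limsup_relu_loss_flow_critical limsup_relu_loss_flow_Inf)+
qed

end
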